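(* Let $M$ be an $n$-paving matroid on $[d]$, let $p\in[d]$ be an element that is not a coloop (i.e., $p$ lies in some circuit), and let $M'=M\setminus\{p\}$. Then: (i) if $M'$ is liftable and $\deg(p)\le1$, then $M$ is liftable; (ii) if $M'$ is not liftable and $\deg(p)\ge1$, then $M$ is not liftable.
   Context: An $n$-paving matroid is a matroid of rank $n$ all of whose circuits have size $n$ or $n+1$. A dependent hyperplane is a maximal subset of size at least $n$ all of whose $n$-subsets are circuits; $\deg(p)$ is the number of dependent hyperplanes of $M$ containing $p$. For a matroid $N$ on a finite set $E$, the circuit variety $V_{\mathcal{C}(N)}$ is the set of tuples $(\gamma_e)_{e\in E}$ of vectors in $\mathbb{C}^n$ such that $(\gamma_e)_{e\in S}$ is linearly dependent for every dependent set $S$ of $N$. $N$ is liftable if for every tuple $(\gamma_e)_{e\in E}$ in $\mathbb{C}^n$ spanning a hyperplane $H\subset\mathbb{C}^n$ and every $q\notin H$, there exist scalars $z_e\in\mathbb{C}$ such that $(\gamma_e+z_eq)_{e\in E}\in V_{\mathcal{C}(N)}$ and the vectors $\gamma_e+z_eq$ do not all lie in a common hyperplane. Both $M$ and $M'$ are considered with vectors in $\mathbb{C}^n$. *)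

theory Defs
  imports "HOL-Analysis.Analysis"
begin

definition matroid :: "'a set \<Rightarrow> ('a set \<Rightarrow> bool) \<Rightarrow> bool" where
  "matroid E indep \<longleftrightarrow> finite E \<and> indep {} \<and>
     (\<forall>X. indep X \<longrightarrow> X \<subseteq> E) \<and>
     (\<forall>X Y. indep X \<and> Y \<subseteq> X \<longrightarrow> indep Y) \<and>
     (\<forall>X Y. indep X \<and> indep Y \<and> card X < card Y \<longrightarrow> (\<exists>y\<in>Y - X. indep (insert y X)))"

definition mrank :: "('a set \<Rightarrow> bool) \<Rightarrow> nat" where
  "mrank indep = Max {card I | I. indep I}"

definition circuit :: "'a set \<Rightarrow> ('a set \<Rightarrow> bool) \<Rightarrow> 'a set \<Rightarrow> bool" where
  "circuit E indep C \<longleftrightarrow> C \<subseteq> E \<and> \<not> indep C \<and> (\<forall>x\<in>C. indep (C - {x}))"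

definition dependent_set :: "'a set \<Rightarrow> ('a set \<Rightarrow> bool) \<Rightarrow> 'a set \<Rightarrow> bool" where
  "dependent_set E indep S \<longleftrightarrow> S \<subseteq> E \<and> \<not> indep S"

definition mdelete :: "('a set \<Rightarrow> bool) \<Rightarrow> 'a \<Rightarrow> ('a set \<Rightarrow> bool)" where
  "mdelete indep p = (\<lambda>X. indep X \<and> p \<notin> X)"

definition paving :: "nat \<Rightarrow> 'a set \<Rightarrow> ('a set \<Rightarrow> bool) \<Rightarrow> bool" where
  "paving n E indep \<longleftrightarrow> mrank indep = n \<and>
     (\<forall>C. circuit E indep C \<longrightarrow> card C = n \<or> card C = n + 1)"

definition hyp_candidate :: "nat \<Rightarrow> 'a set \<Rightarrow> ('a set \<Rightarrow> bool) \<Rightarrow> 'a set \<Rightarrow> bool" where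
  "hyp_candidate n E indep S \<longleftrightarrow> S \<subseteq> E \<and> card S \<ge> n \<and>
     (\<forall>T. T \<subseteq> S \<and> card T = n \<longrightarrow> circuit E indep T)"

definition dep_hyperplane :: "nat \<Rightarrow> 'a set \<Rightarrow> ('a set \<Rightarrow> bool) \<Rightarrow> 'a set \<Rightarrow> bool" where
  "dep_hyperplane n E indep S \<longleftrightarrow> hyp_candidate n E indep S \<and>
     (\<forall>S'. hyp_candidate n E indep S' \<and> S \<subseteq> S' \<longrightarrow> S' = S)"

definition mdeg :: "nat \<Rightarrow> 'a set \<Rightarrow> ('a set \<Rightarrow> bool) \<Rightarrow> 'a \<Rightarrow> nat" where
  "mdeg n E indep p = card {S. dep_hyperplane n E indep S \<and> p \<in> S}"

definition clin_dependent :: "'a set \<Rightarrow> ('a \<Rightarrow> complex ^ ('n::finite)) \<Rightarrow> bool" where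
  "clin_dependent S \<gamma> \<longleftrightarrow> (\<exists>c::'a \<Rightarrow> complex. (\<exists>e\<in>S. c e \<noteq> 0) \<and> (\<Sum>e\<in>S. c e *s \<gamma> e) = 0)"

definition cspan_fam :: "'a set \<Rightarrow> ('a \<Rightarrow> complex ^ ('n::finite)) \<Rightarrow> (complex ^ ('n::finite)) set" where
  "cspan_fam S \<gamma> = {(\<Sum>e\<in>S. c e *s \<gamma> e) | c. True}"

definition chyperplane :: "(complex ^ ('n::finite)) set \<Rightarrow> bool" where
  "chyperplane H \<longleftrightarrow> (\<exists>a::complex ^ ('n::finite). a \<noteq> 0 \<and> H = {v. (\<Sum>i\<in>UNIV. a $ i * v $ i) = 0})"

definition circuit_variety :: "('n::finite) itself \<Rightarrow> 'a set \<Rightarrow> ('a set \<Rightarrow> bool) \<Rightarrow> ('a \<Rightarrow> complex ^ ('n::finite)) set" where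
  "circuit_variety _ E indep =
     {\<gamma>. \<forall>S. dependent_set E indep S \<longrightarrow> clin_dependent S \<gamma>}"

definition liftable :: "('n::finite) itself \<Rightarrow> 'a set \<Rightarrow> ('a set \<Rightarrow> bool) \<Rightarrow> bool" where
  "liftable T E indep \<longleftrightarrow>
     (\<forall>(\<gamma>::'a \<Rightarrow> complex ^ ('n::finite)) H q. chyperplane H \<and> cspan_fam E \<gamma> = H \<and> q \<notin> H \<longrightarrow>
        (\<exists>z::'a \<Rightarrow> complex.
           (\<lambda>e. \<gamma> e + z e *s q) \<in> circuit_variety T E indep \<and>
           \<not> (\<exists>H'. chyperplane H' \<and> (\<forall>e\<in>E. \<gamma> e + z e *s q \<in> H'))))"

end

(* Write H = {x. cdot a x = 0} for the hyperplane spanned by the configuration g and q for the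
   transversal direction.  For g in H, the lifted family g e + z e q is dependent on S iff some
   nonzero c satisfies sum c e g e = 0 and sum c e z e = 0.  In a paving matroid only the
   dependent sets avoiding p and the n-circuits through p matter, and if deg p <= 1 the latter
   all lie in the unique dependent hyperplane S0 through p.

   (i) If g on E - p still spans H, lift it using the liftability of M - p.  The (n-1)-subsets
   of S0 - p that are independent for this lift all span one and the same hyperplane W (if
   there are none, any lift of p works); lift p into W if q is not in W, and otherwise lift
   p alone by q.  If g on E - p does not span H, it lies in a space of
   dimension n - 2, and lifting by q a single element that depends on the others (outside S0
   whenever possible) works.

   (ii) Start from a non-liftable configuration of M - p.  If all nearby configurations with
   n - 1 independent points in S0 - p were liftable, their lifts, normalised to vanish on a
   fixed basis, would converge to a lift of the original one, since circuit varieties are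
   closed.  Putting p at 0 in such a configuration gives a non-liftable configuration of M:
   a lift of it would restrict to a lift of M - p lying in a hyperplane, and the circuit formed
   by p and the n - 1 independent points would force the lift of p into it as well. *)

theory Submission
  imports Defs
begin

section \<open>Linear forms on complex n-space\<close>

definition cdot :: "complex^'n \<Rightarrow> complex^'n \<Rightarrow> complex" where
  "cdot a x = (\<Sum>i\<in>UNIV. a $ i * x $ i)"

lemma cdot_add [simp]: "cdot a (x + y) = cdot a x + cdot a y"
  by (simp add: cdot_def distrib_left sum.distrib)

lemma cdot_diff [simp]: "cdot a (x - y) = cdot a x - cdot a y"
  by (simp add: cdot_def right_diff_distrib sum_subtractf)

lemma cdot_scale [simp]: "cdot a (c *s x) = c * cdot a x"
  by (simp add: cdot_def sum_distrib_left algebra_simps)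

lemma cdot_zero [simp]: "cdot a 0 = 0"
  by (simp add: cdot_def)

lemma cdot_zero_left [simp]: "cdot 0 x = 0"
  by (simp add: cdot_def)

lemma cdot_sum: "cdot a (\<Sum>e\<in>S. f e) = (\<Sum>e\<in>S. cdot a (f e))"
  by (induction S rule: infinite_finite_induct) auto

lemma cdot_axis: "cdot a (axis i 1) = a $ i"
proof -
  have "cdot a (axis i 1) = (\<Sum>j\<in>UNIV. if j = i then a $ i else 0)"
    unfolding cdot_def by (rule sum.cong) (auto simp: axis_def)
  then show ?thesis by simp
qed

lemma cdot_eq_0_imp_eq_0: "(\<And>x. cdot a x = 0) \<Longrightarrow> a = 0"
  by (metis cdot_axis vec_eq_iff zero_index)

lemma chyperplane_iff: "chyperplane H \<longleftrightarrow> (\<exists>a. a \<noteq> 0 \<and> H = {x. cdot a x = 0})"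
  unfolding chyperplane_def cdot_def by simp

lemma subspace_cdot_kernel: "vec.subspace {x. cdot a x = 0}"
  unfolding vec.subspace_def by auto

lemma subspace_eq_UNIV_if_kernel_and_transversal:
  assumes "cdot a q \<noteq> 0" "vec.subspace W" "{x. cdot a x = 0} \<subseteq> W" "q \<in> W"
  shows "W = UNIV"
proof -
  have "x \<in> W" for x
  proof -
    let ?t = "cdot a x / cdot a q"
    have "x - ?t *s q \<in> W"
      using assms(1,3) by auto
    then have "(x - ?t *s q) + ?t *s q \<in> W"
      using vec.subspace_add[OF assms(2)] vec.subspace_scale[OF assms(2,4)] by blast
    then show ?thesis by simp
  qed
  then show ?thesis by blast
qed

lemma eq_0_if_cdot_kernel_subset:
  assumes "cdot a q \<noteq> 0" "cdot b q = 0" "{x. cdot a x = 0} \<subseteq> {x. cdot b x = 0}"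
  shows "b = 0"
  using subspace_eq_UNIV_if_kernel_and_transversal[OF assms(1) subspace_cdot_kernel assms(3)] assms(2)
  by (intro cdot_eq_0_imp_eq_0) blast

lemma dim_cdot_kernel:
  fixes a :: "complex^'n"
  assumes "a \<noteq> 0"
  shows "vec.dim {x. cdot a x = 0} + 1 = CARD('n)"
proof -
  let ?K = "{x. cdot a x = 0}"
  obtain q where q: "cdot a q \<noteq> 0" using assms cdot_eq_0_imp_eq_0 by blast
  have "vec.span (insert q ?K) = UNIV"
    using subspace_eq_UNIV_if_kernel_and_transversal[OF q vec.subspace_span]
    by (meson insertCI subsetI vec.span_base)
  then have "vec.dim (insert q ?K) = CARD('n)"
    by (metis vec.dim_span vec_dim_card)
  moreover have "q \<notin> vec.span ?K"
    using q by (subst vec.span_subspace[OF subset_refl vec.span_superset subspace_cdot_kernel]) simp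
  ultimately show ?thesis by (simp add: vec.dim_insert)
qed

lemma scaleR_eq_complex_scale: "c *\<^sub>R x = complex_of_real c *s (x :: complex^'n)"
  by (simp add: vec_eq_iff scaleR_conv_of_real[symmetric])

lemma ex_cdot_annihilator:
  fixes U :: "(complex^'n) set"
  assumes "vec.subspace U" "U \<noteq> UNIV"
  shows "\<exists>a. a \<noteq> 0 \<and> (\<forall>x\<in>U. cdot a x = 0)"
proof -
  have sub: "subspace U"
    using assms(1) unfolding vec.subspace_def subspace_def by (simp add: scaleR_eq_complex_scale)
  have "dim U \<noteq> DIM(complex^'n)"
    using assms(2) dim_eq_full[of U] span_eq_iff[THEN iffD2, OF sub] by simp
  then have "dim U < DIM(complex^'n)" using dim_subset_UNIV[of U] by linarith
  then obtain y :: "complex^'n" where y: "y \<noteq> 0" "\<And>z. z \<in> span U \<Longrightarrow> orthogonal y z"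
    using orthogonal_to_subspace_exists by blast
  have y_orth: "y \<bullet> z = 0" if "z \<in> U" for z
    using y(2)[of z] that span_base[of z U] unfolding orthogonal_def by blast
  \<comment> \<open>The real inner product is the real part of the complex form with the conjugate of y.\<close>
  define a where "a = (\<chi> i. cnj (y $ i))"
  have "a \<noteq> 0"
    using y(1) by (auto simp: a_def vec_eq_iff)
  moreover have "cdot a x = 0" if "x \<in> U" for x
  proof -
    have ix: "\<i> *s x \<in> U" using assms(1) that unfolding vec.subspace_def by blast
    have "Re (cdot a x) = y \<bullet> x"
      unfolding cdot_def inner_vec_def Re_sum a_def
      by (rule sum.cong) (auto simp: inner_complex_def)
    moreover have "Im (cdot a x) = - (y \<bullet> (\<i> *s x))"
      unfolding cdot_def inner_vec_def Im_sum a_def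
      by (simp add: inner_complex_def sum_negf[symmetric] algebra_simps)
    ultimately show ?thesis using y_orth[OF that] y_orth[OF ix] by (simp add: complex_eq_iff)
  qed
  ultimately show ?thesis by blast
qed

section \<open>Spans and linear dependence of families\<close>

lemma cspan_fam_sum: "(\<Sum>e\<in>S. c e *s v e) \<in> cspan_fam S v"
  unfolding cspan_fam_def by blast

lemma cspan_fam_eq_span:
  assumes "finite S"
  shows "cspan_fam S v = vec.span (v ` S)"
proof
  show "cspan_fam S v \<subseteq> vec.span (v ` S)"
    unfolding cspan_fam_def
    by (auto intro!: vec.span_sum vec.span_scale intro: vec.span_base)
  have "vec.subspace (cspan_fam S v)"
    unfolding vec.subspace_def cspan_fam_def
  proof (intro conjI ballI allI)
    show "0 \<in> {\<Sum>e\<in>S. c e *s v e |c. True}"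
      by (auto intro!: exI[of _ "\<lambda>_. 0"])
  next
    fix x y assume "x \<in> {\<Sum>e\<in>S. c e *s v e |c. True}" "y \<in> {\<Sum>e\<in>S. c e *s v e |c. True}"
    then obtain c1 c2 where "x = (\<Sum>e\<in>S. c1 e *s v e)" "y = (\<Sum>e\<in>S. c2 e *s v e)" by auto
    then have "x + y = (\<Sum>e\<in>S. (c1 e + c2 e) *s v e)"
      by (simp add: vector_sadd_rdistrib sum.distrib)
    then show "x + y \<in> {\<Sum>e\<in>S. c e *s v e |c. True}"
      by (auto intro!: exI[of _ "\<lambda>e. c1 e + c2 e"])
  next
    fix k x assume "x \<in> {\<Sum>e\<in>S. c e *s v e |c. True}"
    then obtain c where "x = (\<Sum>e\<in>S. c e *s v e)" by auto
    then have "k *s x = (\<Sum>e\<in>S. (k * c e) *s v e)"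
      by (simp add: vec.scale_sum_right vector_smult_assoc)
    then show "k *s x \<in> {\<Sum>e\<in>S. c e *s v e |c. True}"
      by (auto intro!: exI[of _ "\<lambda>e. k * c e"])
  qed
  moreover have "v e \<in> cspan_fam S v" if "e \<in> S" for e
  proof -
    have "(\<Sum>f\<in>S. (if f = e then 1 else 0) *s v f) = v e"
      using assms that by (simp add: if_distrib[of "\<lambda>c. c *s _"] cong: if_cong)
    then show ?thesis using cspan_fam_sum by metis
  qed
  ultimately show "vec.span (v ` S) \<subseteq> cspan_fam S v"
    by (intro vec.span_minimal) auto
qed

lemma cspan_fam_base: "finite S \<Longrightarrow> e \<in> S \<Longrightarrow> v e \<in> cspan_fam S v"
  by (simp add: cspan_fam_eq_span vec.span_base)

lemma subspace_cspan_fam: "finite S \<Longrightarrow> vec.subspace (cspan_fam S v)"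
  by (simp add: cspan_fam_eq_span)

lemma cspan_fam_cong: "(\<And>e. e \<in> S \<Longrightarrow> v e = w e) \<Longrightarrow> cspan_fam S v = cspan_fam S w"
  unfolding cspan_fam_def by (metis (no_types, lifting) sum.cong)

lemma clin_dependent_cong:
  "(\<And>e. e \<in> S \<Longrightarrow> v e = w e) \<Longrightarrow> clin_dependent S v = clin_dependent S w"
  unfolding clin_dependent_def by (metis (no_types, lifting) sum.cong)

lemma cspan_fam_subset:
  assumes "finite S" "finite T" "\<And>e. e \<in> S \<Longrightarrow> v e \<in> cspan_fam T w"
  shows "cspan_fam S v \<subseteq> cspan_fam T w"
  using assms vec.span_minimal[of "v ` S" "vec.span (w ` T)"]
  by (auto simp: cspan_fam_eq_span)

lemma cspan_fam_subset_cdot_kernel: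
  assumes "finite S" "\<And>e. e \<in> S \<Longrightarrow> cdot a (v e) = 0"
  shows "cspan_fam S v \<subseteq> {x. cdot a x = 0}"
proof -
  have "v ` S \<subseteq> {x. cdot a x = 0}"
    using assms(2) by blast
  then show ?thesis
    using assms(1) vec.span_minimal[OF _ subspace_cdot_kernel] by (simp add: cspan_fam_eq_span)
qed

lemma cspan_fam_mono: "finite T \<Longrightarrow> S \<subseteq> T \<Longrightarrow> cspan_fam S v \<subseteq> cspan_fam T v"
  by (metis cspan_fam_base cspan_fam_subset finite_subset subsetD)

lemma clin_dependent_mono:
  assumes "finite T" "S \<subseteq> T" "clin_dependent S v"
  shows "clin_dependent T v"
proof -
  obtain c e0 where c: "e0 \<in> S" "c e0 \<noteq> 0" "(\<Sum>e\<in>S. c e *s v e) = 0"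
    using assms(3) unfolding clin_dependent_def by blast
  let ?d = "\<lambda>e. if e \<in> S then c e else 0"
  have "(\<Sum>e\<in>T. ?d e *s v e) = (\<Sum>e\<in>S. ?d e *s v e)"
    using assms(1,2) by (intro sum.mono_neutral_right) auto
  also have "\<dots> = 0"
    using c(3) by simp
  finally show ?thesis
    unfolding clin_dependent_def using c assms(2) by (intro exI[of _ ?d]) auto
qed

lemma clin_dependent_iff_dependent_image:
  assumes "finite S"
  shows "clin_dependent S v \<longleftrightarrow> \<not> inj_on v S \<or> vec.dependent (v ` S)"
proof
  assume dep: "clin_dependent S v"
  show "\<not> inj_on v S \<or> vec.dependent (v ` S)"
  proof (cases "inj_on v S")
    case inj: True
    obtain c e0 where c: "e0 \<in> S" "c e0 \<noteq> 0" "(\<Sum>e\<in>S. c e *s v e) = 0"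
      using dep unfolding clin_dependent_def by blast
    let ?u = "\<lambda>x. c (the_inv_into S v x)"
    have "(\<Sum>x\<in>v ` S. ?u x *s x) = (\<Sum>e\<in>S. c e *s v e)"
      using inj by (simp add: sum.reindex the_inv_into_f_f)
    moreover have "?u (v e0) \<noteq> 0"
      using inj c by (simp add: the_inv_into_f_f)
    ultimately show ?thesis
      using c assms by (auto simp: vec.dependent_finite)
  qed simp
next
  assume "\<not> inj_on v S \<or> vec.dependent (v ` S)"
  then show "clin_dependent S v"
  proof (cases "inj_on v S")
    case False
    then obtain e1 e2 where e: "e1 \<in> S" "e2 \<in> S" "e1 \<noteq> e2" "v e1 = v e2"
      unfolding inj_on_def by blast
    let ?c = "\<lambda>e. if e = e1 then 1 else if e = e2 then - 1 else 0 :: complex"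
    have "(\<Sum>e\<in>S. ?c e *s v e) = (\<Sum>e\<in>{e1, e2}. ?c e *s v e)"
      by (rule sum.mono_neutral_right) (use assms e in auto)
    also have "\<dots> = 0" using e by simp
    finally show ?thesis
      unfolding clin_dependent_def using e(1) by (intro exI[of _ ?c]) auto
  next
    case True
    then obtain u where u: "\<exists>x\<in>v ` S. u x \<noteq> 0" "(\<Sum>x\<in>v ` S. u x *s x) = 0"
      using assms \<open>\<not> inj_on v S \<or> vec.dependent (v ` S)\<close> by (auto simp: vec.dependent_finite)
    then have "(\<Sum>e\<in>S. u (v e) *s v e) = 0"
      using True by (simp add: sum.reindex)
    then show ?thesis unfolding clin_dependent_def using u(1) by auto
  qed
qed

lemma clin_independentD:
  assumes "finite S" "\<not> clin_dependent S v"
  shows "inj_on v S" "vec.independent (v ` S)" "card (v ` S) = card S"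
  using assms by (auto simp: clin_dependent_iff_dependent_image card_image)

lemma clin_dependent_if_dim_lt_card:
  assumes "finite S" "v ` S \<subseteq> U" "vec.dim U < card S"
  shows "clin_dependent S v"
  using vec.independent_card_le_dim[OF assms(2)] clin_independentD[OF assms(1)] assms(3)
  by fastforce

lemma cspan_fam_eq_if_dim_le_card:
  assumes "finite S" "\<not> clin_dependent S v" "v ` S \<subseteq> U" "vec.subspace U" "vec.dim U \<le> card S"
  shows "cspan_fam S v = U"
proof -
  have "U \<subseteq> vec.span (v ` S)"
    using vec.card_ge_dim_independent[OF assms(3)] clin_independentD[OF assms(1,2)] assms(5)
    by simp
  moreover have "vec.span (v ` S) \<subseteq> U"
    using vec.span_minimal[OF assms(3,4)] .
  ultimately show ?thesis
    using assms(1) by (simp add: cspan_fam_eq_span)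
qed

lemma dim_le_card_if_subset_cspan_fam:
  assumes "finite S" "U \<subseteq> cspan_fam S v"
  shows "vec.dim U \<le> card S"
  using vec.dim_le_card[of U "v ` S"] assms card_image_le[OF assms(1), of v]
  by (simp add: cspan_fam_eq_span)

lemma clin_dependent_if_card_gt:
  fixes v :: "'a \<Rightarrow> complex^'n"
  shows "finite S \<Longrightarrow> CARD('n) < card S \<Longrightarrow> clin_dependent S v"
  using clin_dependent_if_dim_lt_card[of S v UNIV] by (simp add: card_cart_basis)

lemma clin_dependent_in_cdot_kernel:
  fixes v :: "'a \<Rightarrow> complex^'n"
  assumes "a \<noteq> 0" "finite S" "\<And>e. e \<in> S \<Longrightarrow> cdot a (v e) = 0" "CARD('n) \<le> card S"
  shows "clin_dependent S v"
  using clin_dependent_if_dim_lt_card[of S v "{x. cdot a x = 0}"] dim_cdot_kernel[OF assms(1)] assms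
  by fastforce

lemma clin_dependent_in_two_cdot_kernels:
  fixes v :: "'a \<Rightarrow> complex^'n"
  assumes "cdot a q \<noteq> 0" "b \<noteq> 0" "cdot b q = 0" "finite S"
    and "\<And>e. e \<in> S \<Longrightarrow> cdot a (v e) = 0 \<and> cdot b (v e) = 0" "CARD('n) \<le> card S + 1"
  shows "clin_dependent S v"
proof -
  let ?Ka = "{x. cdot a x = 0}" and ?Kab = "{x. cdot a x = 0 \<and> cdot b x = 0}"
  have "\<not> ?Ka \<subseteq> {x. cdot b x = 0}"
    using eq_0_if_cdot_kernel_subset[OF assms(1,3)] assms(2) by blast
  moreover have "vec.subspace ?Kab"
    using vec.subspace_inter[OF subspace_cdot_kernel[of a] subspace_cdot_kernel[of b]]
    by (simp add: Collect_conj_eq)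
  ultimately have "vec.span ?Kab \<subset> vec.span ?Ka"
    using subspace_cdot_kernel[of a]
    by (subst (1 2) vec.span_subspace[OF subset_refl vec.span_superset]) auto
  then have "vec.dim ?Kab < vec.dim ?Ka"
    by (rule vec.dim_psubset)
  moreover have "vec.dim ?Ka + 1 = CARD('n)"
    using assms(1) by (intro dim_cdot_kernel) auto
  ultimately show ?thesis
    using assms(4-6) by (intro clin_dependent_if_dim_lt_card[of S v ?Kab]) auto
qed

lemma cspan_fam_eq_cdot_kernel:
  fixes v :: "'a \<Rightarrow> complex^'n"
  assumes "a \<noteq> 0" "finite S" "\<not> clin_dependent S v"
    and "\<And>e. e \<in> S \<Longrightarrow> cdot a (v e) = 0" "CARD('n) \<le> card S + 1"
  shows "cspan_fam S v = {x. cdot a x = 0}"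
proof (rule cspan_fam_eq_if_dim_le_card[OF assms(2,3) _ subspace_cdot_kernel])
  show "v ` S \<subseteq> {x. cdot a x = 0}" using assms(4) by blast
  show "vec.dim {x. cdot a x = 0} \<le> card S"
    using dim_cdot_kernel[OF assms(1)] assms(5) by linarith
qed

lemma card_ge_if_cspan_fam_eq_UNIV:
  fixes v :: "'a \<Rightarrow> complex^'n"
  shows "finite S \<Longrightarrow> cspan_fam S v = UNIV \<Longrightarrow> CARD('n) \<le> card S"
  using dim_le_card_if_subset_cspan_fam[of S UNIV v] by (simp add: card_cart_basis)

lemma cdot_kernel_not_subset_cspan_fam:
  fixes v :: "'a \<Rightarrow> complex^'n"
  assumes "a \<noteq> 0" "finite T" "card T + 1 < CARD('n)"
  shows "\<not> {x. cdot a x = 0} \<subseteq> cspan_fam T v"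
proof
  assume "{x. cdot a x = 0} \<subseteq> cspan_fam T v"
  then have "vec.dim {x. cdot a x = 0} \<le> card T"
    by (rule dim_le_card_if_subset_cspan_fam[OF assms(2)])
  then show False
    using dim_cdot_kernel[OF assms(1)] assms(3) by linarith
qed

lemma clin_dependent_insert_iff:
  assumes "finite S" "e \<notin> S"
  shows "clin_dependent (insert e S) v \<longleftrightarrow> clin_dependent S v \<or> v e \<in> cspan_fam S v"
proof (cases "v e \<in> v ` S")
  case True
  then have "\<not> inj_on v (insert e S)"
    using assms(2) by (auto simp: inj_on_def)
  moreover have "v e \<in> cspan_fam S v"
    using True assms(1) cspan_fam_base by fastforce
  ultimately show ?thesis
    using assms(1) by (simp add: clin_dependent_iff_dependent_image)
next
  case False
  then have "inj_on v (insert e S) \<longleftrightarrow> inj_on v S"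
    by auto
  moreover have "vec.dependent (insert (v e) (v ` S)) \<longleftrightarrow>
      vec.dependent (v ` S) \<or> v e \<in> vec.span (v ` S)"
    using False vec.independent_insert[of "v e" "v ` S"] by auto
  ultimately show ?thesis
    using assms(1) by (simp add: clin_dependent_iff_dependent_image cspan_fam_eq_span)
qed

lemma clin_dependent_imp_mem_cspan_fam:
  assumes "finite T" "clin_dependent T v"
  shows "\<exists>e\<in>T. v e \<in> cspan_fam (T - {e}) v"
proof (cases "inj_on v T")
  case False
  then obtain e1 e2 where e: "e1 \<in> T" "e2 \<in> T" "e1 \<noteq> e2" "v e1 = v e2"
    unfolding inj_on_def by blast
  then have "v e1 \<in> cspan_fam (T - {e1}) v"
    using cspan_fam_base[of "T - {e1}" e2 v] assms(1) by simp
  then show ?thesis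
    using e(1) by blast
next
  case True
  then have "vec.dependent (v ` T)"
    using assms clin_dependent_iff_dependent_image by blast
  then obtain x where x: "x \<in> v ` T" "x \<in> vec.span (v ` T - {x})"
    unfolding vec.dependent_def by blast
  then obtain e where e: "e \<in> T" "x = v e" by blast
  have "v ` T - {x} \<subseteq> v ` (T - {e})" using e by auto
  then have "v e \<in> vec.span (v ` (T - {e}))"
    using vec.span_mono x(2) e(2) by blast
  then show ?thesis
    using e(1) assms(1) cspan_fam_eq_span[of "T - {e}" v] by auto
qed

lemma not_mem_cspan_fam_if_independent:
  assumes "finite B" "e \<in> B" "\<not> clin_dependent B v"
  shows "v e \<notin> cspan_fam (B - {e}) v"
  using clin_dependent_insert_iff[of "B - {e}" e v] assms by (simp add: insert_absorb)

lemma cspan_fam_eq_UNIV_iff: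
  assumes "finite S"
  shows "cspan_fam S v = UNIV \<longleftrightarrow> \<not> (\<exists>H. chyperplane H \<and> (\<forall>e\<in>S. v e \<in> H))"
proof
  assume span: "cspan_fam S v = UNIV"
  show "\<not> (\<exists>H. chyperplane H \<and> (\<forall>e\<in>S. v e \<in> H))"
  proof
    assume "\<exists>H. chyperplane H \<and> (\<forall>e\<in>S. v e \<in> H)"
    then obtain a where a: "a \<noteq> 0" "\<forall>e\<in>S. cdot a (v e) = 0"
      by (auto simp: chyperplane_iff)
    then have "cspan_fam S v \<subseteq> {x. cdot a x = 0}"
      using cspan_fam_subset_cdot_kernel[OF assms] by blast
    then show False
      using span a(1) cdot_eq_0_imp_eq_0 by blast
  qed
next
  assume no_hyperplane: "\<not> (\<exists>H. chyperplane H \<and> (\<forall>e\<in>S. v e \<in> H))"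
  show "cspan_fam S v = UNIV"
  proof (rule ccontr)
    assume "cspan_fam S v \<noteq> UNIV"
    then obtain a where a: "a \<noteq> 0" "\<forall>x\<in>cspan_fam S v. cdot a x = 0"
      using ex_cdot_annihilator[OF subspace_cspan_fam[OF assms]] by blast
    then have "chyperplane {x. cdot a x = 0}" "\<forall>e\<in>S. v e \<in> {x. cdot a x = 0}"
      using cspan_fam_base[OF assms] by (auto simp: chyperplane_iff)
    then show False
      using no_hyperplane by blast
  qed
qed

lemma ex_cdot_nonzero_if_cspan_fam_eq_UNIV:
  assumes "finite S" "cspan_fam S v = UNIV" "A \<noteq> 0"
  shows "\<exists>e\<in>S. cdot A (v e) \<noteq> 0"
  using cspan_fam_subset_cdot_kernel[OF assms(1), of A v] assms(2,3) cdot_eq_0_imp_eq_0 by blast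

section \<open>Lifting along a transversal direction\<close>

lemma lift_sum:
  fixes g :: "'a \<Rightarrow> complex^'n"
  shows "(\<Sum>e\<in>S. c e *s (g e + z e *s q)) = (\<Sum>e\<in>S. c e *s g e) + (\<Sum>e\<in>S. c e * z e) *s q"
proof -
  have "(\<Sum>e\<in>S. c e *s (g e + z e *s q)) = (\<Sum>e\<in>S. c e *s g e + (c e * z e) *s q)"
    by (rule sum.cong) (simp_all add: vector_add_ldistrib vector_smult_assoc)
  also have "\<dots> = (\<Sum>e\<in>S. c e *s g e) + (\<Sum>e\<in>S. c e * z e) *s q"
    by (simp add: sum.distrib vec.scale_sum_left)
  finally show ?thesis .
qed

lemma lift_sum_eq_0_iff:
  assumes "cdot a q \<noteq> 0" "\<And>e. e \<in> S \<Longrightarrow> cdot a (g e) = 0"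
  shows "(\<Sum>e\<in>S. c e *s (g e + z e *s q)) = 0 \<longleftrightarrow>
         (\<Sum>e\<in>S. c e *s g e) = 0 \<and> (\<Sum>e\<in>S. c e * z e) = 0"
  unfolding lift_sum
proof
  let ?G = "\<Sum>e\<in>S. c e *s g e" and ?Z = "\<Sum>e\<in>S. c e * z e"
  assume sum_0: "?G + ?Z *s q = 0"
  have "cdot a ?G = 0"
    using assms(2) by (simp add: cdot_sum)
  then have "?Z * cdot a q = 0"
    using arg_cong[OF sum_0, of "cdot a"] by simp
  then have "?Z = 0"
    using assms(1) by simp
  with sum_0 show "?G = 0 \<and> ?Z = 0"
    by simp
qed simp

lemma clin_dependent_of_lift:
  assumes "cdot a q \<noteq> 0" "\<And>e. e \<in> S \<Longrightarrow> cdot a (g e) = 0"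
    and "clin_dependent S (\<lambda>e. g e + z e *s q)"
  shows "clin_dependent S g"
proof -
  obtain c where c: "\<exists>e\<in>S. c e \<noteq> 0" "(\<Sum>e\<in>S. c e *s (g e + z e *s q)) = 0"
    using assms(3) unfolding clin_dependent_def by blast
  have "(\<Sum>e\<in>S. c e *s g e) = 0"
    by (rule lift_sum_eq_0_iff[THEN iffD1, THEN conjunct1]) (use assms c in auto)
  then show ?thesis
    unfolding clin_dependent_def using c(1) by blast
qed

lemma clin_dependent_lift_if_sums_vanish:
  fixes g :: "'a \<Rightarrow> complex^'n"
  assumes "\<exists>e\<in>S. c e \<noteq> 0" "(\<Sum>e\<in>S. c e *s g e) = 0" "(\<Sum>e\<in>S. c e * z e) = 0"
  shows "clin_dependent S (\<lambda>e. g e + z e *s q)"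
  using assms unfolding clin_dependent_def lift_sum by auto

lemma clin_dependent_if_transversal_in_lift_span:
  assumes "cdot a q \<noteq> 0" "\<And>e. e \<in> S \<Longrightarrow> cdot a (g e) = 0"
    and "q \<in> cspan_fam S (\<lambda>e. g e + z e *s q)"
  shows "clin_dependent S g"
proof -
  obtain c where c: "q = (\<Sum>e\<in>S. c e *s g e) + (\<Sum>e\<in>S. c e * z e) *s q"
    using assms(3) unfolding cspan_fam_def lift_sum by blast
  have "cdot a (\<Sum>e\<in>S. c e *s g e) = 0"
    using assms(2) by (simp add: cdot_sum)
  then have "cdot a q = (\<Sum>e\<in>S. c e * z e) * cdot a q"
    using arg_cong[OF c, of "cdot a"] by simp
  then have sum_z: "(\<Sum>e\<in>S. c e * z e) = 1"
    using assms(1) by simp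
  then have "(\<Sum>e\<in>S. c e *s g e) = 0"
    using c by simp
  moreover have "\<exists>e\<in>S. c e \<noteq> 0"
    using sum_z by (metis (no_types, lifting) mult_eq_0_iff sum.neutral zero_neq_one)
  ultimately show ?thesis
    unfolding clin_dependent_def by blast
qed

section \<open>Paving matroids and dependent hyperplanes\<close>

lemma matroid_finite: "matroid E indep \<Longrightarrow> finite E"
  unfolding matroid_def by blast

lemma matroid_indep_subset: "matroid E indep \<Longrightarrow> indep I \<Longrightarrow> I \<subseteq> E"
  unfolding matroid_def by blast

lemma matroid_indep_empty: "matroid E indep \<Longrightarrow> indep {}"
  unfolding matroid_def by blast

lemma dependent_contains_circuit:
  assumes "finite S" "S \<subseteq> E" "\<not> indep S"
  shows "\<exists>C\<subseteq>S. circuit E indep C"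
proof -
  let ?dep = "\<lambda>C. C \<subseteq> S \<and> \<not> indep C"
  obtain C where C: "?dep C" and min: "\<And>C'. ?dep C' \<Longrightarrow> card C \<le> card C'"
    using ex_has_least_nat[of ?dep S card] assms(3) by blast
  have "indep (C - {x})" if "x \<in> C" for x
  proof (rule ccontr)
    assume "\<not> indep (C - {x})"
    then have "card C \<le> card (C - {x})" using C min by blast
    moreover have "finite C" using C assms(1) finite_subset by blast
    ultimately show False using that card_Diff1_less by fastforce
  qed
  then show ?thesis
    using C assms(2) unfolding circuit_def by blast
qed

lemma paving_circuit_card_ge: "paving n E indep \<Longrightarrow> circuit E indep C \<Longrightarrow> n \<le> card C"
  unfolding paving_def by (metis le_add1 order_refl)

lemma paving_dependent_card_ge:
  assumes "finite E" "paving n E indep" "S \<subseteq> E" "\<not> indep S"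
  shows "n \<le> card S"
proof -
  have fin: "finite S" using assms(1,3) finite_subset by blast
  obtain C where C: "C \<subseteq> S" "circuit E indep C"
    using dependent_contains_circuit[of S E indep, OF fin assms(3,4)] by blast
  then have "n \<le> card C"
    using paving_circuit_card_ge[OF assms(2)] by blast
  also have "card C \<le> card S"
    using card_mono[OF fin C(1)] .
  finally show ?thesis .
qed

lemma paving_dependent_card_eq_imp_circuit:
  assumes "finite E" "paving n E indep" "S \<subseteq> E" "\<not> indep S" "card S = n"
  shows "circuit E indep S"
proof -
  have fin: "finite S" using assms(1,3) finite_subset by blast
  obtain C where C: "C \<subseteq> S" "circuit E indep C"
    using dependent_contains_circuit[of S E indep, OF fin assms(3,4)] by blast
  then have "n \<le> card C"
    using paving_circuit_card_ge[OF assms(2)] by blast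
  then have "C = S"
    using card_subset_eq[OF fin C(1)] card_mono[OF fin C(1)] assms(5) by simp
  then show ?thesis using C(2) by simp
qed

lemma paving_ex_indep_card:
  assumes "matroid E indep" "paving n E indep"
  shows "\<exists>I. indep I \<and> card I = n"
proof -
  let ?cards = "{card I | I. indep I}"
  have "?cards \<subseteq> card ` Pow E"
    using matroid_indep_subset[OF assms(1)] by blast
  then have "finite ?cards"
    using matroid_finite[OF assms(1)] finite_subset by blast
  moreover have "?cards \<noteq> {}"
    using matroid_indep_empty[OF assms(1)] by blast
  ultimately have "mrank indep \<in> ?cards"
    unfolding mrank_def by (rule Max_in)
  then show ?thesis
    using assms(2) unfolding paving_def by auto
qed

lemma paving_card_ground:
  assumes "matroid E indep" "paving n E indep"
  shows "n \<le> card E"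
proof -
  obtain I where "indep I" "card I = n"
    using paving_ex_indep_card[OF assms] by blast
  moreover have "I \<subseteq> E"
    using matroid_indep_subset[OF assms(1) \<open>indep I\<close>] .
  ultimately show ?thesis
    using card_mono[OF matroid_finite[OF assms(1)]] by blast
qed

lemma dep_hyperplane_circuit:
  "dep_hyperplane n E indep S \<Longrightarrow> T \<subseteq> S \<Longrightarrow> card T = n \<Longrightarrow> circuit E indep T"
  unfolding dep_hyperplane_def hyp_candidate_def by blast

lemma dep_hyperplane_subset: "dep_hyperplane n E indep S \<Longrightarrow> S \<subseteq> E"
  unfolding dep_hyperplane_def hyp_candidate_def by blast

lemma dep_hyperplane_card: "dep_hyperplane n E indep S \<Longrightarrow> n \<le> card S"
  unfolding dep_hyperplane_def hyp_candidate_def by blast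

lemma dep_hyperplane_not_spanning:
  assumes "matroid E indep" "paving n E indep" "dep_hyperplane n E indep S"
  shows "\<exists>x\<in>E. x \<notin> S"
proof (rule ccontr)
  assume "\<not> (\<exists>x\<in>E. x \<notin> S)"
  moreover obtain I where I: "indep I" "card I = n"
    using paving_ex_indep_card[OF assms(1,2)] by blast
  moreover have "I \<subseteq> E"
    using matroid_indep_subset[OF assms(1) I(1)] .
  ultimately have "circuit E indep I"
    using dep_hyperplane_circuit[OF assms(3)] by blast
  then show False
    using I(1) unfolding circuit_def by blast
qed

lemma circuit_subset_dep_hyperplane:
  assumes "finite E" "circuit E indep C" "card C = n"
  shows "\<exists>S. dep_hyperplane n E indep S \<and> C \<subseteq> S"
proof -
  let ?P = "\<lambda>S. hyp_candidate n E indep S \<and> C \<subseteq> S"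
  have C_sub: "C \<subseteq> E"
    using assms(2) unfolding circuit_def by blast
  have "circuit E indep T" if "T \<subseteq> C" "card T = n" for T
    using card_subset_eq[OF finite_subset[OF C_sub assms(1)] that(1)] that(2) assms(2,3) by simp
  then have "?P C"
    unfolding hyp_candidate_def using assms(3) C_sub by (intro conjI allI impI subset_refl) auto
  moreover have "card S < card E + 1" if "?P S" for S
  proof -
    have "S \<subseteq> E"
      using that unfolding hyp_candidate_def by blast
    then show ?thesis
      using card_mono[OF assms(1)] by (simp add: less_Suc_eq_le)
  qed
  ultimately obtain S where S: "?P S" and max: "\<And>S'. ?P S' \<Longrightarrow> card S' \<le> card S"
    using ex_has_greatest_nat[of ?P C card "card E + 1"] by blast
  have "S' = S" if "hyp_candidate n E indep S'" "S \<subseteq> S'" for S'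
  proof -
    have "finite S'"
      using that(1) assms(1) finite_subset unfolding hyp_candidate_def by blast
    moreover have "card S' \<le> card S"
      using that S max by blast
    ultimately show ?thesis
      using that(2) card_seteq by blast
  qed
  then show ?thesis
    using S unfolding dep_hyperplane_def by blast
qed

lemma ex_dep_hyperplane_if_mdeg_ge_1:
  "1 \<le> mdeg n E indep p \<Longrightarrow> \<exists>S. dep_hyperplane n E indep S \<and> p \<in> S"
  unfolding mdeg_def by (metis (no_types, lifting) card.empty empty_Collect_eq not_one_le_zero)

lemma circuit_subset_dep_hyperplane_if_mdeg_le_1:
  assumes "finite E" "mdeg n E indep p \<le> 1"
    and "dep_hyperplane n E indep S0" "p \<in> S0"
    and "circuit E indep C" "card C = n" "p \<in> C"
  shows "C \<subseteq> S0"
proof -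
  obtain S where S: "dep_hyperplane n E indep S" "C \<subseteq> S"
    using circuit_subset_dep_hyperplane[OF assms(1,5,6)] by blast
  let ?Hp = "{S. dep_hyperplane n E indep S \<and> p \<in> S}"
  have "?Hp \<subseteq> Pow E"
    using dep_hyperplane_subset by blast
  then have "finite ?Hp"
    using assms(1) finite_subset by blast
  moreover have "card ?Hp \<le> Suc 0"
    using assms(2) unfolding mdeg_def by simp
  ultimately have "\<forall>S1\<in>?Hp. \<forall>S2\<in>?Hp. S1 = S2"
    using card_le_Suc0_iff_eq by blast
  then have "S = S0"
    using assms(3,4,7) S by blast
  then show ?thesis using S by blast
qed

section \<open>Circuit varieties and spanning lifts\<close>

lemma circuit_variety_iff:
  "L \<in> circuit_variety TYPE('n::finite) E indep \<longleftrightarrow>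
     (\<forall>S. S \<subseteq> E \<longrightarrow> \<not> indep S \<longrightarrow> clin_dependent S L)"
  unfolding circuit_variety_def dependent_set_def by blast

lemma circuit_variety_deletion_iff:
  "L \<in> circuit_variety TYPE('n::finite) (E - {p}) (mdelete indep p) \<longleftrightarrow>
     (\<forall>S. S \<subseteq> E - {p} \<longrightarrow> \<not> indep S \<longrightarrow> clin_dependent S L)"
  unfolding circuit_variety_def dependent_set_def mdelete_def by blast

lemma circuit_variety_restrict_deletion:
  assumes "L \<in> circuit_variety TYPE('n::finite) E indep" "\<And>e. e \<in> E - {p} \<Longrightarrow> L' e = L e"
  shows "L' \<in> circuit_variety TYPE('n) (E - {p}) (mdelete indep p)"
  unfolding circuit_variety_deletion_iff
proof (intro allI impI)
  fix S assume S: "S \<subseteq> E - {p}" "\<not> indep S"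
  then have "clin_dependent S L"
    using assms(1) unfolding circuit_variety_iff by blast
  moreover have "clin_dependent S L' = clin_dependent S L"
    using S(1) assms(2) by (intro clin_dependent_cong) blast
  ultimately show "clin_dependent S L'" by simp
qed

lemma circuit_variety_paving_intro:
  fixes L :: "'a \<Rightarrow> complex^'n"
  assumes "finite E" "paving CARD('n) E indep"
    and avoiding: "\<And>S. S \<subseteq> E - {p} \<Longrightarrow> \<not> indep S \<Longrightarrow> clin_dependent S L"
    and through: "\<And>C. circuit E indep C \<Longrightarrow> card C = CARD('n) \<Longrightarrow> p \<in> C \<Longrightarrow> clin_dependent C L"
  shows "L \<in> circuit_variety TYPE('n) E indep"
  unfolding circuit_variety_iff
proof (intro allI impI)
  fix S assume S: "S \<subseteq> E" "\<not> indep S"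
  have "CARD('n) \<le> card S"
    by (rule paving_dependent_card_ge[OF assms(1,2) S])
  moreover have "finite S"
    using S(1) assms(1) finite_subset by blast
  moreover have "circuit E indep S" if "card S = CARD('n)"
    by (rule paving_dependent_card_eq_imp_circuit[OF assms(1,2) S that])
  ultimately show "clin_dependent S L"
    using avoiding[of S] through[of S] S clin_dependent_if_card_gt[of S L]
    by (cases "p \<in> S") (auto simp: le_less)
qed

definition has_spanning_lift ::
    "'a set \<Rightarrow> ('a set \<Rightarrow> bool) \<Rightarrow> ('a \<Rightarrow> complex^'n::finite) \<Rightarrow> complex^'n \<Rightarrow> bool" where
  "has_spanning_lift E indep g q \<longleftrightarrow>
     (\<exists>z. (\<lambda>e. g e + z e *s q) \<in> circuit_variety TYPE('n) E indep \<and>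
          cspan_fam E (\<lambda>e. g e + z e *s q) = UNIV)"

lemma liftable_iff:
  assumes "finite E"
  shows "liftable TYPE('n::finite) E indep \<longleftrightarrow>
    (\<forall>(g :: 'a \<Rightarrow> complex^'n) a q. cdot a q \<noteq> 0 \<and> cspan_fam E g = {x. cdot a x = 0} \<longrightarrow>
       has_spanning_lift E indep g q)"
  unfolding liftable_def has_spanning_lift_def cspan_fam_eq_UNIV_iff[OF assms]
proof (intro iffI allI impI)
  fix g :: "'a \<Rightarrow> complex^'n" and a q
  assume lift: "\<forall>g H q. chyperplane H \<and> cspan_fam E g = H \<and> q \<notin> H \<longrightarrow>
      (\<exists>z. (\<lambda>e. g e + z e *s q) \<in> circuit_variety TYPE('n) E indep \<and>
           \<not> (\<exists>H'. chyperplane H' \<and> (\<forall>e\<in>E. g e + z e *s q \<in> H')))"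
    and g: "cdot a q \<noteq> 0 \<and> cspan_fam E g = {x. cdot a x = 0}"
  then have "chyperplane {x. cdot a x = 0}"
    unfolding chyperplane_iff by (metis cdot_zero_left)
  then show "\<exists>z. (\<lambda>e. g e + z e *s q) \<in> circuit_variety TYPE('n) E indep \<and>
           \<not> (\<exists>H'. chyperplane H' \<and> (\<forall>e\<in>E. g e + z e *s q \<in> H'))"
    using lift g by blast
next
  fix g :: "'a \<Rightarrow> complex^'n" and H q
  assume lift: "\<forall>g a q. cdot a q \<noteq> 0 \<and> cspan_fam E g = {x. cdot a x = 0} \<longrightarrow>
      (\<exists>z. (\<lambda>e. g e + z e *s q) \<in> circuit_variety TYPE('n) E indep \<and>
           \<not> (\<exists>H'. chyperplane H' \<and> (\<forall>e\<in>E. g e + z e *s q \<in> H')))"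
    and g: "chyperplane H \<and> cspan_fam E g = H \<and> q \<notin> H"
  then obtain a where "H = {x. cdot a x = 0}"
    unfolding chyperplane_iff by blast
  then show "\<exists>z. (\<lambda>e. g e + z e *s q) \<in> circuit_variety TYPE('n) E indep \<and>
           \<not> (\<exists>H'. chyperplane H' \<and> (\<forall>e\<in>E. g e + z e *s q \<in> H'))"
    using lift g by blast
qed

lemma has_spanning_lift_paving_intro:
  fixes g :: "'a \<Rightarrow> complex^'n"
  assumes "finite E" "paving CARD('n) E indep"
    and "\<And>S. S \<subseteq> E - {p} \<Longrightarrow> \<not> indep S \<Longrightarrow> clin_dependent S (\<lambda>e. g e + z e *s q)"
    and "\<And>C. circuit E indep C \<Longrightarrow> card C = CARD('n) \<Longrightarrow> p \<in> C \<Longrightarrow>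
           clin_dependent C (\<lambda>e. g e + z e *s q)"
    and "cspan_fam E (\<lambda>e. g e + z e *s q) = UNIV"
  shows "has_spanning_lift E indep g q"
  unfolding has_spanning_lift_def using circuit_variety_paving_intro[OF assms(1-4)] assms(5) by blast

section \<open>Liftability passes from the deletion to the matroid\<close>

lemma ex_cdot_vanishing_on_transversal:
  assumes "cdot a q \<noteq> 0" "vec.subspace W" "W \<subseteq> {x. cdot a x = 0}" "W \<noteq> {x. cdot a x = 0}"
  shows "\<exists>b. b \<noteq> 0 \<and> cdot b q = 0 \<and> (\<forall>w\<in>W. cdot b w = 0)"
proof -
  obtain h where h: "cdot a h = 0" "h \<notin> W"
    using assms(3,4) by blast
  have "h \<notin> vec.span (insert q W)"
  proof
    assume "h \<in> vec.span (insert q W)"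
    then obtain k where k: "h - k *s q \<in> W"
      unfolding vec.span_insert vec.span_subspace[OF subset_refl vec.span_superset assms(2)] by blast
    then have "k * cdot a q = 0"
      using assms(3) h(1) by auto
    then show False
      using k h(2) assms(1) by simp
  qed
  then obtain b where "b \<noteq> 0" "\<forall>x\<in>vec.span (insert q W). cdot b x = 0"
    using ex_cdot_annihilator[OF vec.subspace_span] by blast
  then show ?thesis
    using vec.span_base[of _ "insert q W"] by blast
qed

lemma cspan_fam_unit_lift_eq_UNIV:
  fixes g :: "'a \<Rightarrow> complex^'n"
  assumes fin: "finite E" and aq: "cdot a q \<noteq> 0" and span: "{x. cdot a x = 0} \<subseteq> cspan_fam E g"
    and e1: "e1 \<in> E" "g e1 \<in> cspan_fam (E - {e1}) g"
  shows "cspan_fam E (\<lambda>e. g e + (if e = e1 then 1 else 0) *s q) = UNIV"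
proof -
  define L where "L = (\<lambda>e. g e + (if e = e1 then 1 else 0) *s q)"
  have L_other: "L e = g e" if "e \<noteq> e1" for e
    using that by (simp add: L_def)
  have "g e \<in> cspan_fam E L" if "e \<in> E" for e
  proof (cases "e = e1")
    case True
    have "cspan_fam (E - {e1}) g = cspan_fam (E - {e1}) L"
      using L_other by (intro cspan_fam_cong) simp
    also have "\<dots> \<subseteq> cspan_fam E L"
      using fin by (intro cspan_fam_mono) auto
    finally show ?thesis
      using True e1(2) by blast
  next
    case False
    then show ?thesis
      using cspan_fam_base[OF fin that, of L] L_other by simp
  qed
  then have kernel: "{x. cdot a x = 0} \<subseteq> cspan_fam E L"
    using cspan_fam_subset[OF fin fin] span by blast
  have "L e1 - g e1 \<in> cspan_fam E L"
    using e1(1) \<open>\<And>e. e \<in> E \<Longrightarrow> g e \<in> cspan_fam E L\<close> cspan_fam_base[OF fin, of e1 L]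
      vec.subspace_diff[OF subspace_cspan_fam[OF fin]] by blast
  then have "q \<in> cspan_fam E L"
    by (simp add: L_def)
  then show ?thesis
    using subspace_eq_UNIV_if_kernel_and_transversal[OF aq subspace_cspan_fam[OF fin] kernel]
    unfolding L_def by blast
qed

lemma has_spanning_lift_by_unit_lift:
  fixes g :: "'a \<Rightarrow> complex^'n"
  assumes M: "matroid E indep" and P: "paving CARD('n) E indep"
    and aq: "cdot a q \<noteq> 0" and span: "cspan_fam E g = {x. cdot a x = 0}"
    and b: "b \<noteq> 0" "cdot b q = 0" "\<forall>e\<in>E - {p}. cdot b (g e) = 0"
    and e1: "e1 \<in> E - {p}" "g e1 \<in> cspan_fam (E - {p} - {e1}) g"
    and through_e1: "\<And>C. circuit E indep C \<Longrightarrow> card C = CARD('n) \<Longrightarrow> p \<in> C \<Longrightarrow> e1 \<in> C \<Longrightarrow>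
                       clin_dependent (C - {e1}) g"
  shows "has_spanning_lift E indep g q"
proof -
  define z :: "'a \<Rightarrow> complex" where "z e = (if e = e1 then 1 else 0)" for e
  define L where "L e = g e + z e *s q" for e
  have L_other: "L e = g e" if "e \<noteq> e1" for e
    using that by (simp add: L_def z_def)
  have fin: "finite E"
    using matroid_finite[OF M] .
  have gH: "cdot a (g e) = 0" if "e \<in> E" for e
    using cspan_fam_base[OF fin that, of g] span by blast
  have "cspan_fam (E - {p} - {e1}) g \<subseteq> cspan_fam (E - {e1}) g"
    using fin by (intro cspan_fam_mono) auto
  then have "cspan_fam E L = UNIV"
    using cspan_fam_unit_lift_eq_UNIV[OF fin aq _ _, of g e1] span e1
    unfolding L_def z_def by blast
  moreover have "clin_dependent S L" if S: "S \<subseteq> E - {p}" "\<not> indep S" for S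
  proof (rule clin_dependent_in_cdot_kernel[OF b(1)])
    show "finite S"
      using S(1) fin finite_subset by blast
    show "cdot b (L e) = 0" if "e \<in> S" for e
      using b(2,3) that S(1) by (auto simp: L_def)
    show "CARD('n) \<le> card S"
      using paving_dependent_card_ge[OF fin P _ S(2)] S(1) by blast
  qed
  moreover have "clin_dependent C L"
    if C: "circuit E indep C" "card C = CARD('n)" "p \<in> C" for C
  proof -
    have C_sub: "C \<subseteq> E" and fin_C: "finite C"
      using C(1) fin finite_subset unfolding circuit_def by blast+
    show ?thesis
    proof (cases "e1 \<in> C")
      case True
      have "clin_dependent (C - {e1}) L"
        using through_e1[OF C True] L_other clin_dependent_cong[of "C - {e1}" L g] by simp
      then show ?thesis
        using clin_dependent_mono[OF fin_C] by blast
    next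
      case False
      have "clin_dependent C g"
        using clin_dependent_in_cdot_kernel[of a C g] aq fin_C gH C_sub C(2) by fastforce
      moreover have "clin_dependent C L = clin_dependent C g"
        using False by (intro clin_dependent_cong L_other) blast
      ultimately show ?thesis by simp
    qed
  qed
  ultimately show ?thesis
    using has_spanning_lift_paving_intro[OF fin P, of p g z q] unfolding L_def by blast
qed

lemma clin_dependent_diff_if_free_element:
  fixes g :: "'a \<Rightarrow> complex^'n"
  assumes fin: "finite E'"
    and dep: "\<And>T. T \<subseteq> E' \<Longrightarrow> CARD('n) \<le> card T + 1 \<Longrightarrow> clin_dependent T g"
    and x: "x \<in> E'" "x \<notin> C" "g x \<notin> cspan_fam (E' - {x}) g"
    and C: "finite C" "C - {p} \<subseteq> E'" "card C = CARD('n)" "p \<in> C" "p \<notin> E'" "e0 \<in> C" "e0 \<in> E'"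
  shows "clin_dependent (C - {e0}) g"
proof -
  let ?R = "C - {p, e0}"
  have "p \<noteq> e0"
    using C(5,7) by blast
  moreover have "card {p, e0} \<le> card C"
    using card_mono[OF C(1)] C(4,6) by simp
  ultimately have card_R: "card ?R + 2 = CARD('n)"
    using C card_Diff_subset[of "{p, e0}" C] by auto
  have R_sub: "?R \<subseteq> E' - {x}"
    using C(2) x(2) by blast
  then have "insert x ?R \<subseteq> E'"
    using x(1) by blast
  moreover have "card (insert x ?R) + 1 = CARD('n)"
    using card_R x(2) C(1) by simp
  ultimately have "clin_dependent (insert x ?R) g"
    using dep by simp
  moreover have "g x \<notin> cspan_fam ?R g"
    using x(3) cspan_fam_mono[of "E' - {x}" ?R g] fin R_sub by auto
  ultimately have "clin_dependent ?R g"
    using clin_dependent_insert_iff[of ?R x g] C(1) x(2) by simp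
  then show ?thesis
    using clin_dependent_mono[of "C - {e0}" ?R g] C(1) by auto
qed

lemma has_spanning_lift_if_deletion_not_spanning:
  fixes g :: "'a \<Rightarrow> complex^'n"
  assumes M: "matroid E indep" and P: "paving CARD('n) E indep" and pE: "p \<in> E"
    and deg: "mdeg CARD('n) E indep p \<le> 1"
    and aq: "cdot a q \<noteq> 0" and span: "cspan_fam E g = {x. cdot a x = 0}"
    and not_span: "cspan_fam (E - {p}) g \<noteq> {x. cdot a x = 0}"
  shows "has_spanning_lift E indep g q"
proof -
  let ?E' = "E - {p}" and ?n = "CARD('n)"
  have fin: "finite E" and fin': "finite ?E'"
    using matroid_finite[OF M] by auto
  have gH: "cdot a (g e) = 0" if "e \<in> E" for e
    using cspan_fam_base[OF fin that, of g] span by blast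
  have "cspan_fam ?E' g \<subseteq> {x. cdot a x = 0}"
    using cspan_fam_mono[OF fin, of ?E' g] span by blast
  then obtain b where b: "b \<noteq> 0" "cdot b q = 0" "\<forall>w\<in>cspan_fam ?E' g. cdot b w = 0"
    using ex_cdot_vanishing_on_transversal[OF aq subspace_cspan_fam[OF fin'] _ not_span] by blast
  have bg: "\<forall>e\<in>?E'. cdot b (g e) = 0"
    using b(3) cspan_fam_base[OF fin'] by blast
  \<comment> \<open>The vectors g e for e in E - {p} span a space of dimension at most n - 2.\<close>
  have dep': "clin_dependent T g" if "T \<subseteq> ?E'" "?n \<le> card T + 1" for T
    using clin_dependent_in_two_cdot_kernels[OF aq b(1,2), of T g] that fin' finite_subset gH bg
    by blast
  have "?n \<le> card ?E' + 1"
    using paving_card_ground[OF M P] pE fin by simp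
  then obtain e0 where e0: "e0 \<in> ?E'" "g e0 \<in> cspan_fam (?E' - {e0}) g"
    using clin_dependent_imp_mem_cspan_fam[OF fin' dep'] by blast
  note unit_lift = has_spanning_lift_by_unit_lift[OF M P aq span b(1,2) bg]
  show ?thesis
  proof (cases "\<exists>S0. dep_hyperplane ?n E indep S0 \<and> p \<in> S0")
    case False
    then have "\<not> (circuit E indep C \<and> card C = ?n \<and> p \<in> C)" for C
      using circuit_subset_dep_hyperplane[OF fin] by blast
    then show ?thesis
      using unit_lift[OF e0] by blast
  next
    case True
    then obtain S0 where S0: "dep_hyperplane ?n E indep S0" "p \<in> S0" by blast
    note in_S0 = circuit_subset_dep_hyperplane_if_mdeg_le_1[OF fin deg S0]
    show ?thesis
    proof (cases "\<exists>x\<in>E - S0. g x \<in> cspan_fam (?E' - {x}) g")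
      case True
      then obtain x where x: "x \<in> E - S0" "g x \<in> cspan_fam (?E' - {x}) g" by blast
      then show ?thesis
        using unit_lift[of x] S0(2) in_S0 by blast
    next
      case False
      obtain x where x: "x \<in> E" "x \<notin> S0"
        using dep_hyperplane_not_spanning[OF M P S0(1)] by blast
      have "clin_dependent (C - {e0}) g"
        if C: "circuit E indep C" "card C = ?n" "p \<in> C" "e0 \<in> C" for C
      proof (rule clin_dependent_diff_if_free_element[OF fin' dep'])
        have "C \<subseteq> E"
          using C(1) unfolding circuit_def by blast
        then show "finite C" "C - {p} \<subseteq> ?E'"
          using finite_subset fin by auto
        show "x \<in> ?E'" "x \<notin> C" "g x \<notin> cspan_fam (?E' - {x}) g"
          using x S0(2) False in_S0[OF C(1-3)] by auto
      qed (use C e0(1) in auto)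
      then show ?thesis
        using unit_lift[OF e0] by blast
    qed
  qed
qed

lemma ex_transversal_decomposition:
  fixes v :: "'a \<Rightarrow> complex^'n"
  assumes "finite D" "\<not> clin_dependent D v" "card D + 1 = CARD('n)" "q \<notin> cspan_fam D v"
  shows "\<exists>k. x - k *s q \<in> cspan_fam D v"
proof -
  have indep: "vec.independent (v ` D)" "card (v ` D) = card D"
    using clin_independentD[OF assms(1,2)] by auto
  have q_span: "q \<notin> vec.span (v ` D)"
    using assms(1,4) by (simp add: cspan_fam_eq_span)
  then have "q \<notin> v ` D"
    using vec.span_base by blast
  then have "card (insert q (v ` D)) = CARD('n)"
    using assms(1,3) indep(2) by simp
  moreover have "vec.independent (insert q (v ` D))"
    using vec.independent_insertI[OF q_span indep(1)] .
  ultimately have "UNIV \<subseteq> vec.span (insert q (v ` D))"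
    using vec.card_ge_dim_independent[of "insert q (v ` D)" UNIV] by (simp add: card_cart_basis)
  then show ?thesis
    using assms(1) unfolding vec.span_insert by (auto simp: cspan_fam_eq_span)
qed

lemma cspan_fam_subset_in_dep_hyperplane:
  fixes L :: "'a \<Rightarrow> complex^'n"
  assumes fin: "finite E" and S0: "dep_hyperplane CARD('n) E indep S0"
    and lift: "L \<in> circuit_variety TYPE('n) (E - {p}) (mdelete indep p)"
    and D0: "D0 \<subseteq> S0 - {p}" and D: "D \<subseteq> S0 - {p}" "card D + 1 = CARD('n)" "\<not> clin_dependent D L"
  shows "cspan_fam D0 L \<subseteq> cspan_fam D L"
proof -
  have S0_sub: "S0 \<subseteq> E"
    using dep_hyperplane_subset[OF S0] .
  have fin_S0: "finite S0"
    using finite_subset[OF S0_sub fin] .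
  have fin_D: "finite D" and fin_D0: "finite D0"
    using D(1) D0 fin_S0 finite_subset by blast+
  have "L y \<in> cspan_fam D L" if y: "y \<in> D0" for y
  proof (cases "y \<in> D")
    case True
    then show ?thesis using cspan_fam_base[OF fin_D] by blast
  next
    case False
    have "insert y D \<subseteq> S0" "card (insert y D) = CARD('n)"
      using y D0 D(1,2) fin_D False by auto
    then have "\<not> indep (insert y D)"
      using dep_hyperplane_circuit[OF S0] unfolding circuit_def by blast
    moreover have "insert y D \<subseteq> E - {p}"
      using y D0 D(1) S0_sub by blast
    ultimately have "clin_dependent (insert y D) L"
      using lift unfolding circuit_variety_deletion_iff by blast
    then show ?thesis
      using clin_dependent_insert_iff[OF fin_D False] D(3) by blast
  qed
  then show ?thesis
    using cspan_fam_subset[OF fin_D0 fin_D] by blast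
qed

lemma circuit_through_dependent_or_cspan_fam_superset:
  fixes L :: "'a \<Rightarrow> complex^'n"
  assumes fin: "finite E" and deg: "mdeg CARD('n) E indep p \<le> 1"
    and S0: "dep_hyperplane CARD('n) E indep S0" "p \<in> S0"
    and lift: "L \<in> circuit_variety TYPE('n) (E - {p}) (mdelete indep p)"
    and D0: "D0 \<subseteq> S0 - {p}"
    and C: "circuit E indep C" "card C = CARD('n)" "p \<in> C"
  shows "clin_dependent (C - {p}) L \<or> cspan_fam D0 L \<subseteq> cspan_fam (C - {p}) L"
proof -
  have "C \<subseteq> S0"
    using circuit_subset_dep_hyperplane_if_mdeg_le_1[OF fin deg S0 C] .
  moreover have "finite C"
    using C(1) finite_subset fin unfolding circuit_def by blast
  ultimately have "C - {p} \<subseteq> S0 - {p}" "card (C - {p}) + 1 = CARD('n)"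
    using C(2,3) by auto
  then show ?thesis
    using cspan_fam_subset_in_dep_hyperplane[OF fin S0(1) lift D0] by blast
qed

lemma has_spanning_lift_if_transversal_outside:
  fixes g :: "'a \<Rightarrow> complex^'n"
  assumes M: "matroid E indep" and P: "paving CARD('n) E indep"
    and deg: "mdeg CARD('n) E indep p \<le> 1"
    and lift': "(\<lambda>e. g e + z' e *s q) \<in> circuit_variety TYPE('n) (E - {p}) (mdelete indep p)"
    and span': "cspan_fam (E - {p}) (\<lambda>e. g e + z' e *s q) = UNIV"
    and S0: "dep_hyperplane CARD('n) E indep S0" "p \<in> S0"
    and D0: "D0 \<subseteq> S0 - {p}" "card D0 + 1 = CARD('n)"
      "\<not> clin_dependent D0 (\<lambda>e. g e + z' e *s q)" "q \<notin> cspan_fam D0 (\<lambda>e. g e + z' e *s q)"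
  shows "has_spanning_lift E indep g q"
proof -
  define L' where "L' = (\<lambda>e. g e + z' e *s q)"
  have fin: "finite E"
    using matroid_finite[OF M] .
  have fin_D0: "finite D0"
    by (rule finite_subset[OF _ fin]) (use D0(1) dep_hyperplane_subset[OF S0(1)] in blast)
  obtain k where k: "g p - k *s q \<in> cspan_fam D0 L'"
    using ex_transversal_decomposition[OF fin_D0 D0(3,2,4)] unfolding L'_def by blast
  \<comment> \<open>Lifting p to g p - k q puts it into the common span of all bases of S0 - {p}.\<close>
  define z where "z = z'(p := - k)"
  define L where "L = (\<lambda>e. g e + z e *s q)"
  have L_other: "L e = L' e" if "e \<noteq> p" for e
    using that by (simp add: L_def L'_def z_def)
  have Lp: "L p \<in> cspan_fam D0 L'"
    using k by (simp add: L_def z_def)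
  have "cspan_fam (E - {p}) L = cspan_fam (E - {p}) L'"
    by (intro cspan_fam_cong L_other) blast
  then have "cspan_fam E L = UNIV"
    using span' cspan_fam_mono[OF fin, of "E - {p}" L] unfolding L'_def by blast
  moreover have "clin_dependent S L" if "S \<subseteq> E - {p}" "\<not> indep S" for S
  proof -
    have "clin_dependent S L'"
      using lift' that unfolding circuit_variety_deletion_iff L'_def by blast
    moreover have "clin_dependent S L = clin_dependent S L'"
      using that(1) by (intro clin_dependent_cong L_other) blast
    ultimately show ?thesis by simp
  qed
  moreover have "clin_dependent C L"
    if C: "circuit E indep C" "card C = CARD('n)" "p \<in> C" for C
  proof -
    have fin_C: "finite C"
      using C(1) finite_subset fin unfolding circuit_def by blast
    have "clin_dependent (C - {p}) L = clin_dependent (C - {p}) L'"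
      "cspan_fam (C - {p}) L = cspan_fam (C - {p}) L'"
      by (auto intro!: clin_dependent_cong cspan_fam_cong L_other)
    then have "clin_dependent (C - {p}) L \<or> L p \<in> cspan_fam (C - {p}) L"
      using circuit_through_dependent_or_cspan_fam_superset[OF fin deg S0 _ D0(1) C] lift' Lp
      unfolding L'_def by blast
    then have "clin_dependent (insert p (C - {p})) L"
      using clin_dependent_insert_iff[of "C - {p}" p L] fin_C by simp
    then show ?thesis
      using C(3) by (simp add: insert_absorb)
  qed
  ultimately show ?thesis
    using has_spanning_lift_paving_intro[OF fin P, of p g z q] unfolding L_def by blast
qed

lemma has_spanning_lift_if_transversal_inside:
  fixes g :: "'a \<Rightarrow> complex^'n"
  assumes M: "matroid E indep" and P: "paving CARD('n) E indep" and pE: "p \<in> E"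
    and deg: "mdeg CARD('n) E indep p \<le> 1"
    and aq: "cdot a q \<noteq> 0" and span': "cspan_fam (E - {p}) g = {x. cdot a x = 0}"
    and gp: "cdot a (g p) = 0"
    and lift': "(\<lambda>e. g e + z' e *s q) \<in> circuit_variety TYPE('n) (E - {p}) (mdelete indep p)"
    and S0: "dep_hyperplane CARD('n) E indep S0" "p \<in> S0"
    and D0: "D0 \<subseteq> S0 - {p}" "q \<in> cspan_fam D0 (\<lambda>e. g e + z' e *s q)"
  shows "has_spanning_lift E indep g q"
proof -
  \<comment> \<open>Lift only p, by q: for every n-circuit C through p, C - {p} is then already g-dependent.\<close>
  define z :: "'a \<Rightarrow> complex" where "z e = (if e = p then 1 else 0)" for e
  define L where "L = (\<lambda>e. g e + z e *s q)"
  have L_other: "L e = g e" if "e \<noteq> p" for e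
    using that by (simp add: L_def z_def)
  have fin: "finite E" and fin': "finite (E - {p})"
    using matroid_finite[OF M] by auto
  have gH: "cdot a (g e) = 0" if "e \<in> E" for e
    using that gp cspan_fam_base[OF fin', of _ g] span' by (cases "e = p") auto
  have "{x. cdot a x = 0} \<subseteq> cspan_fam E g"
    using span' cspan_fam_mono[OF fin, of "E - {p}" g] by blast
  then have "cspan_fam E L = UNIV"
    using cspan_fam_unit_lift_eq_UNIV[OF fin aq _ pE, of g] span' gp unfolding L_def z_def by blast
  moreover have "clin_dependent S L" if S: "S \<subseteq> E - {p}" "\<not> indep S" for S
  proof (rule clin_dependent_in_cdot_kernel)
    show "a \<noteq> 0" using aq by auto
    show "finite S" using finite_subset[OF S(1) fin'] .
    show "cdot a (L e) = 0" if "e \<in> S" for e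
    proof -
      have "e \<in> E" "e \<noteq> p" using that S(1) by auto
      then show ?thesis using gH L_other by simp
    qed
    show "CARD('n) \<le> card S"
      using paving_dependent_card_ge[OF fin P _ S(2)] S(1) by blast
  qed
  moreover have "clin_dependent C L"
    if C: "circuit E indep C" "card C = CARD('n)" "p \<in> C" for C
  proof -
    let ?D = "C - {p}"
    have C_sub: "C \<subseteq> E"
      using C(1) unfolding circuit_def by blast
    have gH_D: "\<And>e. e \<in> ?D \<Longrightarrow> cdot a (g e) = 0"
      using gH C_sub by auto
    have "clin_dependent ?D g"
      using circuit_through_dependent_or_cspan_fam_superset[OF fin deg S0 lift' D0(1) C] D0(2)
        clin_dependent_of_lift[of a q ?D g z', OF aq gH_D]
        clin_dependent_if_transversal_in_lift_span[of a q ?D g z', OF aq gH_D]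
      by blast
    moreover have "clin_dependent ?D L = clin_dependent ?D g"
      by (intro clin_dependent_cong L_other) blast
    ultimately show ?thesis
      using clin_dependent_mono[of C ?D L] finite_subset[OF C_sub fin] by blast
  qed
  ultimately show ?thesis
    using has_spanning_lift_paving_intro[OF fin P, of p g z q] unfolding L_def by blast
qed

lemma has_spanning_lift_if_deletion_spanning:
  fixes g :: "'a \<Rightarrow> complex^'n"
  assumes M: "matroid E indep" and P: "paving CARD('n) E indep" and pE: "p \<in> E"
    and deg: "mdeg CARD('n) E indep p \<le> 1"
    and aq: "cdot a q \<noteq> 0" and span': "cspan_fam (E - {p}) g = {x. cdot a x = 0}"
    and gp: "cdot a (g p) = 0"
    and lift': "has_spanning_lift (E - {p}) (mdelete indep p) g q"
  shows "has_spanning_lift E indep g q"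
proof -
  obtain z' where z': "(\<lambda>e. g e + z' e *s q) \<in> circuit_variety TYPE('n) (E - {p}) (mdelete indep p)"
    "cspan_fam (E - {p}) (\<lambda>e. g e + z' e *s q) = UNIV"
    using lift' unfolding has_spanning_lift_def by blast
  define L' where "L' = (\<lambda>e. g e + z' e *s q)"
  have fin: "finite E"
    using matroid_finite[OF M] .
  show ?thesis
  proof (cases "\<forall>C. circuit E indep C \<and> card C = CARD('n) \<and> p \<in> C \<longrightarrow> clin_dependent (C - {p}) L'")
    case True
    show ?thesis
    proof (rule has_spanning_lift_paving_intro[OF fin P, of p g z' q, folded L'_def])
      show "clin_dependent S L'" if "S \<subseteq> E - {p}" "\<not> indep S" for S
        using z'(1) that unfolding circuit_variety_deletion_iff L'_def by blast
      show "clin_dependent C L'" if "circuit E indep C" "card C = CARD('n)" "p \<in> C" for C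
        using True that clin_dependent_mono[of C "C - {p}" L'] fin finite_subset
        unfolding circuit_def by blast
      show "cspan_fam E L' = UNIV"
        using z'(2) cspan_fam_mono[OF fin, of "E - {p}" L'] unfolding L'_def by blast
    qed
  next
    case False
    then obtain C0 where C0: "circuit E indep C0" "card C0 = CARD('n)" "p \<in> C0"
      "\<not> clin_dependent (C0 - {p}) L'"
      by blast
    obtain S0 where S0: "dep_hyperplane CARD('n) E indep S0" "C0 \<subseteq> S0"
      using circuit_subset_dep_hyperplane[OF fin C0(1,2)] by blast
    have fin_C0: "finite C0"
      using finite_subset[OF _ fin] C0(1) unfolding circuit_def by blast
    have D0: "C0 - {p} \<subseteq> S0 - {p}" "card (C0 - {p}) + 1 = CARD('n)" and p_S0: "p \<in> S0"
      using S0(2) C0(2,3) fin_C0 by (auto simp: card_Diff_singleton)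
    show ?thesis
    proof (cases "q \<in> cspan_fam (C0 - {p}) L'")
      case True
      then show ?thesis
        using has_spanning_lift_if_transversal_inside[OF M P pE deg aq span' gp z'(1) S0(1) p_S0 D0(1)]
        unfolding L'_def by blast
    next
      case False
      then show ?thesis
        using has_spanning_lift_if_transversal_outside[OF M P deg z' S0(1) p_S0 D0] C0(4)
        unfolding L'_def by blast
    qed
  qed
qed

lemma liftable_if_deletion_liftable:
  fixes indep :: "'a set \<Rightarrow> bool"
  assumes M: "matroid E indep" and P: "paving CARD('n::finite) E indep" and pE: "p \<in> E"
    and lift': "liftable TYPE('n) (E - {p}) (mdelete indep p)"
    and deg: "mdeg CARD('n) E indep p \<le> 1"
  shows "liftable TYPE('n) E indep"
proof -
  have fin: "finite E" and fin': "finite (E - {p})"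
    using matroid_finite[OF M] by auto
  have "has_spanning_lift E indep g q"
    if aq: "cdot a q \<noteq> 0" and span: "cspan_fam E g = {x. cdot a x = 0}" for g :: "'a \<Rightarrow> complex^'n" and a q
  proof (cases "cspan_fam (E - {p}) g = {x. cdot a x = 0}")
    case True
    moreover have "cdot a (g p) = 0"
      using cspan_fam_base[OF fin pE, of g] span by blast
    moreover have "has_spanning_lift (E - {p}) (mdelete indep p) g q"
      using lift' True aq unfolding liftable_iff[OF fin'] by blast
    ultimately show ?thesis
      using has_spanning_lift_if_deletion_spanning[OF M P pE deg aq] by blast
  next
    case False
    then show ?thesis
      using has_spanning_lift_if_deletion_not_spanning[OF M P pE deg aq span] by blast
  qed
  then show ?thesis
    unfolding liftable_iff[OF fin] by blast
qed

section \<open>Closedness of circuit varieties\<close>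

lemma ex_convergent_subseq_of_bounded_family:
  fixes x :: "nat \<Rightarrow> 'b \<Rightarrow> complex"
  assumes "finite F" "\<And>k e. e \<in> F \<Longrightarrow> norm (x k e) \<le> C"
  shows "\<exists>r l. strict_mono r \<and> (\<forall>e\<in>F. (\<lambda>k. x (r k) e) \<longlonglongrightarrow> l e)"
  using assms
proof (induction F rule: finite_induct)
  case empty
  show ?case using strict_mono_id by blast
next
  case (insert e0 F)
  obtain r l where r: "strict_mono r" "\<forall>e\<in>F. (\<lambda>k. x (r k) e) \<longlonglongrightarrow> l e"
    using insert.IH insert.prems by blast
  have "bounded (range (\<lambda>k. x (r k) e0))"
    unfolding bounded_iff using insert.prems by blast
  then obtain l0 r0 where r0: "strict_mono r0" "((\<lambda>k. x (r k) e0) \<circ> r0) \<longlonglongrightarrow> l0"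
    using bounded_imp_convergent_subsequence by blast
  have "(\<lambda>k. x (r (r0 k)) e) \<longlonglongrightarrow> (l(e0 := l0)) e" if "e \<in> insert e0 F" for e
  proof (cases "e = e0")
    case True
    then show ?thesis using r0(2) by (simp add: o_def)
  next
    case False
    then have "e \<in> F"
      using that by blast
    then have "((\<lambda>k. x (r k) e) \<circ> r0) \<longlonglongrightarrow> l e"
      using LIMSEQ_subseq_LIMSEQ r(2) r0(1) by blast
    then show ?thesis using False by (simp add: o_def)
  qed
  moreover have "strict_mono (\<lambda>k. r (r0 k))"
    using strict_mono_o[OF r(1) r0(1)] by (simp add: o_def)
  ultimately show ?case
    by blast
qed

lemma tendsto_vector_scalar_mult:
  fixes c :: "nat \<Rightarrow> complex" and v :: "nat \<Rightarrow> complex^'n"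
  assumes "c \<longlonglongrightarrow> c0" "v \<longlonglongrightarrow> v0"
  shows "(\<lambda>k. c k *s v k) \<longlonglongrightarrow> c0 *s v0"
proof (rule vec_tendstoI)
  fix i
  have "(\<lambda>k. c k * v k $ i) \<longlonglongrightarrow> c0 * v0 $ i"
    by (intro tendsto_mult assms(1) tendsto_vec_nth assms(2))
  then show "(\<lambda>k. (c k *s v k) $ i) \<longlonglongrightarrow> (c0 *s v0) $ i" by simp
qed

lemma clin_dependent_normalized:
  assumes "finite S" "clin_dependent S v"
  shows "\<exists>c. (\<Sum>e\<in>S. cmod (c e)) = 1 \<and> (\<Sum>e\<in>S. c e *s v e) = 0"
proof -
  obtain c e0 where c: "e0 \<in> S" "c e0 \<noteq> 0" "(\<Sum>e\<in>S. c e *s v e) = 0"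
    using assms(2) unfolding clin_dependent_def by blast
  define N where "N = (\<Sum>e\<in>S. cmod (c e))"
  have "0 < cmod (c e0)" "cmod (c e0) \<le> N"
    using c(1,2) assms(1) member_le_sum[of e0 S "\<lambda>e. cmod (c e)"] by (auto simp: N_def)
  then have N: "N > 0" by linarith
  have "(\<Sum>e\<in>S. cmod (c e / N)) = (\<Sum>e\<in>S. cmod (c e)) / N"
    using N by (simp add: norm_divide sum_divide_distrib)
  also have "\<dots> = 1"
    using N by (simp add: N_def)
  finally have "(\<Sum>e\<in>S. cmod (c e / N)) = 1" .
  moreover have "(\<Sum>e\<in>S. (c e / N) *s v e) = (1 / N) *s (\<Sum>e\<in>S. c e *s v e)"
    by (simp add: vec.scale_sum_right vector_smult_assoc)
  ultimately show ?thesis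
    using c(3) by (intro exI[of _ "\<lambda>e. c e / N"]) simp
qed

lemma circuit_variety_closed:
  fixes L :: "nat \<Rightarrow> 'a \<Rightarrow> complex^'n"
  assumes fin: "finite E" and in_variety: "\<And>k. L k \<in> circuit_variety TYPE('n) E indep"
    and lim: "\<And>e. e \<in> E \<Longrightarrow> (\<lambda>k. L k e) \<longlonglongrightarrow> L0 e"
  shows "L0 \<in> circuit_variety TYPE('n) E indep"
  unfolding circuit_variety_iff
proof (intro allI impI)
  fix S assume S: "S \<subseteq> E" "\<not> indep S"
  have fin_S: "finite S"
    using finite_subset[OF S(1) fin] .
  have "\<forall>k. \<exists>c. (\<Sum>e\<in>S. cmod (c e)) = 1 \<and> (\<Sum>e\<in>S. c e *s L k e) = 0"
  proof
    fix k
    have "clin_dependent S (L k)"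
      using in_variety[of k] S unfolding circuit_variety_iff by blast
    then show "\<exists>c. (\<Sum>e\<in>S. cmod (c e)) = 1 \<and> (\<Sum>e\<in>S. c e *s L k e) = 0"
      by (rule clin_dependent_normalized[OF fin_S])
  qed
  from choice[OF this] obtain c
    where c: "\<And>k. (\<Sum>e\<in>S. cmod (c k e)) = 1" "\<And>k. (\<Sum>e\<in>S. c k e *s L k e) = 0"
    by blast
  have "cmod (c k e) \<le> 1" if "e \<in> S" for k e
    using member_le_sum[OF that, of "\<lambda>e. cmod (c k e)"] c(1)[of k] fin_S by simp
  then obtain r c0 where r: "strict_mono r" "\<forall>e\<in>S. (\<lambda>k. c (r k) e) \<longlonglongrightarrow> c0 e"
    using ex_convergent_subseq_of_bounded_family[OF fin_S] by blast
  have L_r: "(\<lambda>k. L (r k) e) \<longlonglongrightarrow> L0 e" if "e \<in> S" for e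
    using LIMSEQ_subseq_LIMSEQ[OF lim r(1)] that S(1) by (auto simp: o_def)
  have "(\<lambda>k. \<Sum>e\<in>S. cmod (c (r k) e)) \<longlonglongrightarrow> (\<Sum>e\<in>S. cmod (c0 e))"
    using r(2) by (intro tendsto_sum tendsto_norm) blast
  then have "(\<Sum>e\<in>S. cmod (c0 e)) = 1"
    using c(1) LIMSEQ_unique by (simp add: tendsto_const_iff)
  then have "\<exists>e\<in>S. c0 e \<noteq> 0"
    by (metis (no_types, lifting) norm_zero sum.neutral zero_neq_one)
  moreover have "(\<lambda>k. \<Sum>e\<in>S. c (r k) e *s L (r k) e) \<longlonglongrightarrow> (\<Sum>e\<in>S. c0 e *s L0 e)"
    using r(2) L_r by (intro tendsto_sum tendsto_vector_scalar_mult) blast+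
  then have "(\<Sum>e\<in>S. c0 e *s L0 e) = 0"
    using c(2) by (simp add: tendsto_const_iff)
  ultimately show "clin_dependent S L0"
    unfolding clin_dependent_def by blast
qed

lemma cspan_fam_lift_eq_UNIV_if_vanishing_on_basis:
  fixes g :: "'a \<Rightarrow> complex^'n"
  assumes fin: "finite E" and aq: "cdot a q \<noteq> 0"
    and B: "B \<subseteq> E" "cspan_fam B g = {x. cdot a x = 0}" "\<forall>b\<in>B. w b = 0"
    and e0: "e0 \<in> E" "w e0 \<noteq> 0" "cdot a (g e0) = 0"
  shows "cspan_fam E (\<lambda>e. g e + w e *s q) = UNIV"
proof -
  let ?L = "\<lambda>e. g e + w e *s q"
  have fin_B: "finite B"
    using finite_subset[OF B(1) fin] .
  have "cspan_fam B g = cspan_fam B ?L"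
    using B(3) by (intro cspan_fam_cong) simp
  then have kernel: "{x. cdot a x = 0} \<subseteq> cspan_fam E ?L"
    using B(1,2) cspan_fam_mono[OF fin, of B ?L] by blast
  have "?L e0 - g e0 \<in> cspan_fam E ?L"
    using cspan_fam_base[OF fin e0(1), of ?L] kernel e0(3)
      vec.subspace_diff[OF subspace_cspan_fam[OF fin]] by blast
  then have "w e0 *s q \<in> cspan_fam E ?L"
    by simp
  then have "(1 / w e0) *s (w e0 *s q) \<in> cspan_fam E ?L"
    using vec.subspace_scale[OF subspace_cspan_fam[OF fin]] by blast
  moreover have "(1 / w e0) *s (w e0 *s q) = q"
    using e0(2) by (simp add: vector_smult_assoc)
  ultimately have "q \<in> cspan_fam E ?L"
    by simp
  then show ?thesis
    using subspace_eq_UNIV_if_kernel_and_transversal[OF aq subspace_cspan_fam[OF fin] kernel] by blast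
qed

lemma cdot_transversal_ne_0_if_annihilates_lifted_basis:
  fixes G :: "'a \<Rightarrow> complex^'n"
  assumes aq: "cdot a q \<noteq> 0" and fin_B: "finite B" and span_B: "cspan_fam B G = {x. cdot a x = 0}"
    and A: "A \<noteq> 0" "\<forall>b\<in>B. cdot A (G b + z b *s q) = 0"
  shows "cdot A q \<noteq> 0"
proof
  assume Aq: "cdot A q = 0"
  then have "cspan_fam B G \<subseteq> {x. cdot A x = 0}"
    using cspan_fam_subset_cdot_kernel[OF fin_B, of A G] A(2) by simp
  then show False
    using eq_0_if_cdot_kernel_subset[OF aq Aq] A(1) span_B by blast
qed

lemma ex_normalized_lift_vanishing_on_basis:
  fixes G :: "'a \<Rightarrow> complex^'n"
  assumes fin: "finite E" and aq: "cdot a q \<noteq> 0"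
    and B: "B \<subseteq> E" "card B + 1 = CARD('n)" "cspan_fam B G = {x. cdot a x = 0}"
    and GH: "\<forall>e\<in>E. cdot a (G e) = 0"
    and lift: "has_spanning_lift E indep G q"
  shows "\<exists>w. (\<lambda>e. G e + w e *s q) \<in> circuit_variety TYPE('n) E indep \<and>
             (\<forall>b\<in>B. w b = 0) \<and> (\<Sum>e\<in>E. cmod (w e)) = 1"
proof -
  obtain z where z: "(\<lambda>e. G e + z e *s q) \<in> circuit_variety TYPE('n) E indep"
    "cspan_fam E (\<lambda>e. G e + z e *s q) = UNIV"
    using lift unfolding has_spanning_lift_def by blast
  define L where "L = (\<lambda>e. G e + z e *s q)"
  have fin_B: "finite B"
    using finite_subset[OF B(1) fin] .
  have "cspan_fam B L \<noteq> UNIV"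
    using card_ge_if_cspan_fam_eq_UNIV[OF fin_B, of L] B(2) by linarith
  then obtain A where A: "A \<noteq> 0" "\<forall>x\<in>cspan_fam B L. cdot A x = 0"
    using ex_cdot_annihilator[OF subspace_cspan_fam[OF fin_B]] by blast
  have AL_B: "\<forall>b\<in>B. cdot A (L b) = 0"
    using A(2) cspan_fam_base[OF fin_B] by blast
  have Aq: "cdot A q \<noteq> 0"
    using cdot_transversal_ne_0_if_annihilates_lifted_basis[OF aq fin_B B(3) A(1)] AL_B
    unfolding L_def by blast
  \<comment> \<open>W e is the q-coordinate of L e for the splitting ker A + span {q}; it vanishes on B.\<close>
  define W where "W e = cdot A (L e) / cdot A q" for e
  define N where "N = (\<Sum>e\<in>E. cmod (W e))"
  obtain e0 where e0: "e0 \<in> E" "W e0 \<noteq> 0"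
    using ex_cdot_nonzero_if_cspan_fam_eq_UNIV[OF fin z(2) A(1)] Aq unfolding W_def L_def by auto
  have "cmod (W e0) \<le> N"
    unfolding N_def by (rule member_le_sum) (use e0(1) fin in auto)
  moreover have "0 < cmod (W e0)"
    using e0(2) by simp
  ultimately have N: "N > 0"
    by linarith
  define w where "w e = W e / N" for e
  have "(\<Sum>e\<in>E. cmod (w e)) = (\<Sum>e\<in>E. cmod (W e)) / N"
    using N by (simp add: w_def norm_divide sum_divide_distrib)
  also have "\<dots> = 1"
    using N by (simp add: N_def)
  finally have "(\<Sum>e\<in>E. cmod (w e)) = 1" .
  moreover have "\<forall>b\<in>B. w b = 0"
    using AL_B by (simp add: w_def W_def)
  moreover have "(\<lambda>e. G e + w e *s q) \<in> circuit_variety TYPE('n) E indep"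
    unfolding circuit_variety_iff
  proof (intro allI impI)
    fix S assume S: "S \<subseteq> E" "\<not> indep S"
    then have "clin_dependent S L"
      using z(1) unfolding circuit_variety_iff L_def by blast
    then obtain c where c: "\<exists>e\<in>S. c e \<noteq> 0" "(\<Sum>e\<in>S. c e *s L e) = 0"
      unfolding clin_dependent_def by blast
    have "(\<Sum>e\<in>S. c e *s G e) = 0"
      by (rule lift_sum_eq_0_iff[THEN iffD1, THEN conjunct1]) (use aq GH S(1) c(2) in \<open>auto simp: L_def\<close>)
    moreover have "(\<Sum>e\<in>S. c e * w e) = cdot A (\<Sum>e\<in>S. c e *s L e) / cdot A q / N"
      by (simp add: w_def W_def cdot_sum sum_divide_distrib)
    ultimately show "clin_dependent S (\<lambda>e. G e + w e *s q)"
      using clin_dependent_lift_if_sums_vanish[OF c(1)] c(2) by simp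
  qed
  ultimately show ?thesis
    by blast
qed

section \<open>Non-liftability passes from the deletion to the matroid\<close>

lemma mem_cspan_fam_if_two_scalars:
  assumes "finite X" "x + s1 *s w \<in> cspan_fam X g" "x + s2 *s w \<in> cspan_fam X g" "s1 \<noteq> s2"
  shows "w \<in> cspan_fam X g" "x \<in> cspan_fam X g"
proof -
  note sub = subspace_cspan_fam[OF assms(1), of g]
  have "(x + s1 *s w) - (x + s2 *s w) \<in> cspan_fam X g"
    using vec.subspace_diff[OF sub assms(2,3)] .
  moreover have "(x + s1 *s w) - (x + s2 *s w) = (s1 - s2) *s w"
    by (simp add: vec_eq_iff algebra_simps)
  ultimately have "(1 / (s1 - s2)) *s ((s1 - s2) *s w) \<in> cspan_fam X g"
    using vec.subspace_scale[OF sub] by metis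
  moreover have "(1 / (s1 - s2)) *s ((s1 - s2) *s w) = w"
    using assms(4) by (simp only: vector_smult_assoc) simp
  ultimately show w: "w \<in> cspan_fam X g"
    by simp
  have "(x + s1 *s w) - s1 *s w \<in> cspan_fam X g"
    using vec.subspace_diff[OF sub assms(2) vec.subspace_scale[OF sub w]] .
  then show "x \<in> cspan_fam X g"
    by simp
qed

lemma ex_small_scalar_avoiding_spans:
  fixes x w :: "complex^'n"
  assumes X: "finite X" "w \<notin> cspan_fam X g" and Y: "finite Y" and \<delta>: "\<delta> > 0"
  shows "\<exists>s. norm (s *s w) < \<delta> \<and> x + s *s w \<notin> cspan_fam X g \<and>
    (x \<notin> cspan_fam Y h \<longrightarrow> x + s *s w \<notin> cspan_fam Y h)"
proof -
  define \<epsilon> where "\<epsilon> = \<delta> / (4 * (norm w + 1))"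
  have \<epsilon>: "\<epsilon> > 0"
    using \<delta> by (simp add: \<epsilon>_def add_nonneg_pos)
  define s :: "nat \<Rightarrow> complex" where "s j = of_real (real j * \<epsilon>)" for j
  have s_inj: "s i \<noteq> s j" if "i \<noteq> j" for i j
    using that \<epsilon> by (simp add: s_def)
  \<comment> \<open>Each of the two conditions fails for at most one s, so one of three values works.\<close>
  define bad where "bad j \<longleftrightarrow> x + s j *s w \<in> cspan_fam X g \<or>
      (x \<notin> cspan_fam Y h \<and> x + s j *s w \<in> cspan_fam Y h)" for j
  have bad_X: "\<not> (x + s i *s w \<in> cspan_fam X g \<and> x + s j *s w \<in> cspan_fam X g)"
    if "i \<noteq> j" for i j
    using mem_cspan_fam_if_two_scalars(1)[OF X(1) _ _ s_inj[OF that]] X(2) by blast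
  have bad_Y: "\<not> (x \<notin> cspan_fam Y h \<and> x + s i *s w \<in> cspan_fam Y h \<and> x + s j *s w \<in> cspan_fam Y h)"
    if "i \<noteq> j" for i j
    using mem_cspan_fam_if_two_scalars(2)[OF Y _ _ s_inj[OF that]] by blast
  have "\<exists>j\<in>{1, 2, 3 :: nat}. \<not> bad j"
    using bad_X[of 1 2] bad_X[of 1 3] bad_X[of 2 3] bad_Y[of 1 2] bad_Y[of 1 3] bad_Y[of 2 3]
    unfolding bad_def by auto
  then obtain j where j: "j \<in> {1, 2, 3}" "\<not> bad j" ..
  have "s j *s w = (real j * \<epsilon>) *\<^sub>R w"
    by (simp only: s_def scaleR_eq_complex_scale)
  then have "norm (s j *s w) = real j * \<epsilon> * norm w"
    using \<epsilon> by simp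
  also have "\<dots> \<le> 3 * \<epsilon> * (norm w + 1)"
    using j(1) \<epsilon> by (intro mult_mono) auto
  also have "\<dots> = 3 / 4 * \<delta>"
  proof -
    have "norm w + 1 > 0"
      using norm_ge_zero[of w] by linarith
    then show ?thesis
      unfolding \<epsilon>_def by (simp add: field_simps)
  qed
  also have "\<dots> < \<delta>"
    using \<delta> by simp
  finally show ?thesis
    using j(2) unfolding bad_def by blast
qed

lemma clin_independent_fun_upd:
  assumes "finite B" "\<not> clin_dependent (B - {e}) g" "e \<in> B \<longrightarrow> y \<notin> cspan_fam (B - {e}) g"
  shows "\<not> clin_dependent B (g(e := y))"
proof -
  have "clin_dependent (B - {e}) (g(e := y)) = clin_dependent (B - {e}) g"
    "cspan_fam (B - {e}) (g(e := y)) = cspan_fam (B - {e}) g"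
    by (intro clin_dependent_cong cspan_fam_cong; simp)+
  then show ?thesis
    using clin_dependent_insert_iff[of "B - {e}" e "g(e := y)"] assms
    by (cases "e \<in> B") (auto simp: insert_absorb)
qed

lemma perturb_to_enlarge_independent_subset:
  fixes g g0 :: "'a \<Rightarrow> complex^'n"
  assumes fin: "finite E" and a: "a \<noteq> 0"
    and close: "\<forall>e\<in>E. cdot a (g e) = 0 \<and> norm (g e - g0 e) < \<delta>"
    and B: "B \<subseteq> E" "\<not> clin_dependent B g"
    and T: "T \<subseteq> X" "\<not> clin_dependent T g" "card T + 1 < CARD('n)"
    and X: "X \<subseteq> E" "CARD('n) \<le> card X + 1"
  shows "\<exists>g' T'. (\<forall>e\<in>E. cdot a (g' e) = 0 \<and> norm (g' e - g0 e) < \<delta>) \<and> \<not> clin_dependent B g'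
     \<and> T' \<subseteq> X \<and> card T' = card T + 1 \<and> \<not> clin_dependent T' g'"
proof -
  have fin_X: "finite X"
    using finite_subset[OF X(1) fin] .
  have fin_T: "finite T" and fin_B: "finite B"
    using finite_subset[OF T(1) fin_X] finite_subset[OF B(1) fin] .
  have "\<not> X \<subseteq> T"
  proof
    assume "X \<subseteq> T"
    then have "card X \<le> card T"
      by (rule card_mono[OF fin_T])
    then show False
      using T(3) X(2) by linarith
  qed
  then obtain e where e: "e \<in> X" "e \<notin> T" by blast
  have eE: "e \<in> E" using e(1) X(1) by blast
  obtain w where w: "cdot a w = 0" "w \<notin> cspan_fam T g"
    using cdot_kernel_not_subset_cspan_fam[OF a fin_T T(3)] by blast
  obtain s where s: "norm (s *s w) < \<delta> - norm (g e - g0 e)" "g e + s *s w \<notin> cspan_fam T g"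
    "g e \<notin> cspan_fam (B - {e}) g \<longrightarrow> g e + s *s w \<notin> cspan_fam (B - {e}) g"
  proof (rule ex_small_scalar_avoiding_spans[OF fin_T w(2) finite_Diff[OF fin_B], THEN exE])
    show "0 < \<delta> - norm (g e - g0 e)"
      using close eE by simp
  qed blast
  define g' where "g' = g(e := g e + s *s w)"
  have "norm (g' e - g0 e) < \<delta>"
    using norm_triangle_ineq[of "g e - g0 e" "s *s w"] s(1) unfolding g'_def
    by (simp add: algebra_simps)
  then have close': "\<forall>x\<in>E. cdot a (g' x) = 0 \<and> norm (g' x - g0 x) < \<delta>"
    using close w(1) eE by (auto simp: g'_def)
  have "\<not> clin_dependent B g'"
    using clin_independent_fun_upd[OF fin_B, of e g] s(3) B(2) g'_def
      not_mem_cspan_fam_if_independent[OF fin_B _ B(2)] clin_dependent_mono[OF fin_B, of "B - {e}" g]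
    by blast
  moreover have "\<not> clin_dependent (insert e T) g'"
    using clin_independent_fun_upd[of "insert e T" e g] fin_T e(2) T(2) s(2) g'_def by simp
  moreover have "insert e T \<subseteq> X" "card (insert e T) = card T + 1"
    using e T(1) fin_T by auto
  ultimately show ?thesis
    using close' by blast
qed

lemma perturb_to_independent_subset:
  fixes g0 :: "'a \<Rightarrow> complex^'n"
  assumes fin: "finite E" and a: "a \<noteq> 0" and g0H: "\<forall>e\<in>E. cdot a (g0 e) = 0"
    and B: "B \<subseteq> E" "\<not> clin_dependent B g0"
    and X: "X \<subseteq> E" "CARD('n) \<le> card X + 1"
    and \<delta>: "\<delta> > 0"
  shows "\<exists>g. (\<forall>e\<in>E. cdot a (g e) = 0 \<and> norm (g e - g0 e) < \<delta>) \<and> \<not> clin_dependent B g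
     \<and> (\<exists>T\<subseteq>X. card T + 1 = CARD('n) \<and> \<not> clin_dependent T g)"
proof -
  have "\<exists>g T. (\<forall>e\<in>E. cdot a (g e) = 0 \<and> norm (g e - g0 e) < \<delta>) \<and> \<not> clin_dependent B g
      \<and> T \<subseteq> X \<and> card T = m \<and> \<not> clin_dependent T g" if "m + 1 \<le> CARD('n)" for m
    using that
  proof (induction m)
    case 0
    have "\<not> clin_dependent {} g0"
      unfolding clin_dependent_def by simp
    then show ?case
      using g0H \<delta> B(2) by (intro exI[of _ g0] exI[of _ "{}"]) simp
  next
    case (Suc m)
    then obtain g T where "\<forall>e\<in>E. cdot a (g e) = 0 \<and> norm (g e - g0 e) < \<delta>"
      "\<not> clin_dependent B g" "T \<subseteq> X" "card T = m" "\<not> clin_dependent T g"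
      by auto
    then show ?case
      using perturb_to_enlarge_independent_subset[OF fin a _ B(1) _ _ _ _ X, of g g0 \<delta> T] Suc.prems
      by auto
  qed
  from this[of "CARD('n) - 1"] show ?thesis
    by (metis Suc_pred' add.commute le_refl plus_1_eq_Suc zero_less_card_finite)
qed

lemma ex_independent_subset_spanning_cdot_kernel:
  fixes g :: "'a \<Rightarrow> complex^'n"
  assumes fin: "finite E" and a: "a \<noteq> 0" and span: "{x. cdot a x = 0} \<subseteq> cspan_fam E g"
  shows "\<exists>B\<subseteq>E. card B + 1 = CARD('n) \<and> \<not> clin_dependent B g"
proof -
  have "\<exists>B\<subseteq>E. card B = m \<and> \<not> clin_dependent B g" if "m + 1 \<le> CARD('n)" for m
    using that
  proof (induction m)
    case 0
    show ?case
      unfolding clin_dependent_def by (intro exI[of _ "{}"]) simp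
  next
    case (Suc m)
    then obtain B where B: "B \<subseteq> E" "card B = m" "\<not> clin_dependent B g"
      by auto
    have fin_B: "finite B"
      using finite_subset[OF B(1) fin] .
    have "\<not> cspan_fam E g \<subseteq> cspan_fam B g"
      using cdot_kernel_not_subset_cspan_fam[OF a fin_B, of g] B(2) Suc.prems span by auto
    then obtain e where e: "e \<in> E" "g e \<notin> cspan_fam B g"
      using cspan_fam_subset[OF fin fin_B] by blast
    then have "e \<notin> B"
      using cspan_fam_base[OF fin_B] by blast
    then show ?case
      using clin_dependent_insert_iff[OF fin_B, of e g] e B fin_B
      by (intro exI[of _ "insert e B"]) auto
  qed
  from this[of "CARD('n) - 1"] show ?thesis
    by (metis Suc_pred' add.commute le_refl plus_1_eq_Suc zero_less_card_finite)
qed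

lemma has_spanning_lift_if_limit_of_normalized_lifts:
  fixes G :: "nat \<Rightarrow> 'a \<Rightarrow> complex^'n"
  assumes fin: "finite E" and aq: "cdot a q \<noteq> 0"
    and B: "B \<subseteq> E" "cspan_fam B g0 = {x. cdot a x = 0}" and g0H: "\<forall>e\<in>E. cdot a (g0 e) = 0"
    and G_lim: "\<And>e. e \<in> E \<Longrightarrow> (\<lambda>k. G k e) \<longlonglongrightarrow> g0 e"
    and w: "\<And>k. (\<lambda>e. G k e + w k e *s q) \<in> circuit_variety TYPE('n) E indep"
      "\<And>k. \<forall>b\<in>B. w k b = 0" "\<And>k. (\<Sum>e\<in>E. cmod (w k e)) = 1"
  shows "has_spanning_lift E indep g0 q"
proof -
  have "cmod (w k e) \<le> 1" if "e \<in> E" for k e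
    using member_le_sum[OF that, of "\<lambda>e. cmod (w k e)"] w(3)[of k] fin by simp
  then obtain r w0 where r: "strict_mono r" "\<forall>e\<in>E. (\<lambda>k. w (r k) e) \<longlonglongrightarrow> w0 e"
    using ex_convergent_subseq_of_bounded_family[OF fin] by blast
  have "(\<lambda>e. g0 e + w0 e *s q) \<in> circuit_variety TYPE('n) E indep"
  proof (rule circuit_variety_closed[OF fin, of "\<lambda>k e. G (r k) e + w (r k) e *s q"])
    show "(\<lambda>e. G (r k) e + w (r k) e *s q) \<in> circuit_variety TYPE('n) E indep" for k
      using w(1) .
    show "(\<lambda>k. G (r k) e + w (r k) e *s q) \<longlonglongrightarrow> g0 e + w0 e *s q" if "e \<in> E" for e
    proof -
      have "(\<lambda>k. G (r k) e) \<longlonglongrightarrow> g0 e"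
        using LIMSEQ_subseq_LIMSEQ[OF G_lim[OF that] r(1)] by (simp add: o_def)
      then show ?thesis
        using r(2) that by (intro tendsto_add tendsto_vector_scalar_mult tendsto_const) auto
    qed
  qed
  moreover have "\<forall>b\<in>B. w0 b = 0"
  proof
    fix b assume "b \<in> B"
    then have lim: "(\<lambda>k. w (r k) b) \<longlonglongrightarrow> w0 b" and eq: "(\<lambda>k. w (r k) b) = (\<lambda>k. 0)"
      using r(2) w(2) B(1) by blast+
    show "w0 b = 0"
      using LIMSEQ_unique[OF tendsto_const lim[unfolded eq]] by simp
  qed
  moreover obtain e0 where "e0 \<in> E" "w0 e0 \<noteq> 0"
  proof -
    have "(\<lambda>k. \<Sum>e\<in>E. cmod (w (r k) e)) \<longlonglongrightarrow> (\<Sum>e\<in>E. cmod (w0 e))"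
      using r(2) by (intro tendsto_sum tendsto_norm) blast
    then have "(\<Sum>e\<in>E. cmod (w0 e)) = 1"
      using w(3) by (simp add: tendsto_const_iff)
    then show ?thesis
      using that by (metis (no_types, lifting) norm_zero sum.neutral zero_neq_one)
  qed
  ultimately show ?thesis
    unfolding has_spanning_lift_def
    using cspan_fam_lift_eq_UNIV_if_vanishing_on_basis[OF fin aq B] g0H by blast
qed

lemma ex_nonliftable_config_with_independent_subset:
  fixes g0 :: "'a \<Rightarrow> complex^'n"
  assumes fin: "finite E" and aq: "cdot a q \<noteq> 0"
    and span0: "cspan_fam E g0 = {x. cdot a x = 0}"
    and no_lift: "\<not> has_spanning_lift E indep g0 q"
    and X: "X \<subseteq> E" "CARD('n) \<le> card X + 1"
  shows "\<exists>g. (\<forall>e\<in>E. cdot a (g e) = 0) \<and> (\<exists>T\<subseteq>X. card T + 1 = CARD('n) \<and> \<not> clin_dependent T g) \<and>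
    \<not> has_spanning_lift E indep g q"
proof (rule ccontr)
  assume contra: "\<not> ?thesis"
  have a: "a \<noteq> 0"
    using aq by auto
  have g0H: "\<forall>e\<in>E. cdot a (g0 e) = 0"
    using cspan_fam_base[OF fin, of _ g0] span0 by blast
  obtain B where B: "B \<subseteq> E" "card B + 1 = CARD('n)" "\<not> clin_dependent B g0"
    using ex_independent_subset_spanning_cdot_kernel[OF fin a] span0 by blast
  have fin_B: "finite B"
    using finite_subset[OF B(1) fin] .
  have span_B: "cspan_fam B G = {x. cdot a x = 0}"
    if "\<forall>e\<in>E. cdot a (G e) = 0" "\<not> clin_dependent B G" for G
    using cspan_fam_eq_cdot_kernel[OF a fin_B that(2)] that(1) B(1,2) by auto
  have "\<forall>k. \<exists>g. (\<forall>e\<in>E. cdot a (g e) = 0 \<and> norm (g e - g0 e) < 1 / real (Suc k)) \<and>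
      \<not> clin_dependent B g \<and> (\<exists>T\<subseteq>X. card T + 1 = CARD('n) \<and> \<not> clin_dependent T g)"
    using perturb_to_independent_subset[OF fin a g0H B(1,3) X] by simp
  then obtain G where G: "\<And>k. \<forall>e\<in>E. cdot a (G k e) = 0 \<and> norm (G k e - g0 e) < 1 / real (Suc k)"
    "\<And>k. \<not> clin_dependent B (G k)" "\<And>k. \<exists>T\<subseteq>X. card T + 1 = CARD('n) \<and> \<not> clin_dependent T (G k)"
    by metis
  have "\<forall>k. \<exists>w. (\<lambda>e. G k e + w e *s q) \<in> circuit_variety TYPE('n) E indep \<and>
      (\<forall>b\<in>B. w b = 0) \<and> (\<Sum>e\<in>E. cmod (w e)) = 1"
  proof
    fix k
    have "has_spanning_lift E indep (G k) q"
      using contra G(1,3) by blast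
    moreover have "\<forall>e\<in>E. cdot a (G k e) = 0"
      using G(1) by blast
    ultimately show "\<exists>w. (\<lambda>e. G k e + w e *s q) \<in> circuit_variety TYPE('n) E indep \<and>
        (\<forall>b\<in>B. w b = 0) \<and> (\<Sum>e\<in>E. cmod (w e)) = 1"
      using ex_normalized_lift_vanishing_on_basis[OF fin aq B(1,2) span_B] G(2) by blast
  qed
  then obtain w where w: "\<And>k. (\<lambda>e. G k e + w k e *s q) \<in> circuit_variety TYPE('n) E indep"
    "\<And>k. \<forall>b\<in>B. w k b = 0" "\<And>k. (\<Sum>e\<in>E. cmod (w k e)) = 1"
    by metis
  have G_lim: "(\<lambda>k. G k e) \<longlonglongrightarrow> g0 e" if "e \<in> E" for e
  proof -
    have "(\<lambda>k. G k e - g0 e) \<longlonglongrightarrow> 0"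
      using G(1) that by (intro LIMSEQ_norm_0) auto
    then show ?thesis
      using Lim_null by blast
  qed
  then show False
    using has_spanning_lift_if_limit_of_normalized_lifts[OF fin aq B(1) span_B[OF g0H B(3)] g0H G_lim w]
      no_lift by blast
qed

lemma clin_dependent_if_deletion_in_hyperplane:
  fixes L :: "'a \<Rightarrow> complex^'n"
  assumes fin: "finite E" and lift: "L \<in> circuit_variety TYPE('n) E indep"
    and span: "cspan_fam E L = UNIV"
    and A: "A \<noteq> 0" "\<forall>e\<in>E - {p}. cdot A (L e) = 0"
    and T: "T \<subseteq> E - {p}" "p \<in> E" "\<not> indep (insert p T)"
  shows "clin_dependent T L"
proof -
  have fin_T: "finite T"
    using finite_subset[OF T(1)] fin by blast
  have "cdot A (L p) \<noteq> 0"
    using ex_cdot_nonzero_if_cspan_fam_eq_UNIV[OF fin span A(1)] A(2) by blast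
  moreover have "cspan_fam T L \<subseteq> {x. cdot A x = 0}"
    using cspan_fam_subset_cdot_kernel[OF fin_T, of A L] A(2) T(1) by blast
  moreover have "clin_dependent (insert p T) L"
    using lift T unfolding circuit_variety_iff by blast
  ultimately show ?thesis
    using clin_dependent_insert_iff[OF fin_T, of p L] T(1) by blast
qed

lemma not_liftable_if_nonliftable_config:
  fixes g1 :: "'a \<Rightarrow> complex^'n"
  assumes M: "matroid E indep" and pE: "p \<in> E"
    and S: "dep_hyperplane CARD('n) E indep S" "p \<in> S"
    and aq: "cdot a q \<noteq> 0" and g1H: "\<forall>e\<in>E - {p}. cdot a (g1 e) = 0"
    and T: "T \<subseteq> S - {p}" "card T + 1 = CARD('n)" "\<not> clin_dependent T g1"
    and no_lift: "\<not> has_spanning_lift (E - {p}) (mdelete indep p) g1 q"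
  shows "\<not> liftable TYPE('n) E indep"
proof
  assume lift: "liftable TYPE('n) E indep"
  have fin: "finite E" and fin': "finite (E - {p})"
    using matroid_finite[OF M] by auto
  have T_sub: "T \<subseteq> E - {p}"
    using T(1) dep_hyperplane_subset[OF S(1)] by blast
  have fin_T: "finite T"
    using finite_subset[OF T_sub fin'] .
  define g where "g = g1(p := 0)"
  have "cspan_fam T g1 = {x. cdot a x = 0}"
  proof (rule cspan_fam_eq_cdot_kernel[OF _ fin_T T(3)])
    show "a \<noteq> 0" using aq by auto
    show "cdot a (g1 e) = 0" if "e \<in> T" for e using that g1H T_sub by blast
  qed (use T(2) in simp)
  moreover have "cspan_fam T g1 = cspan_fam T g"
    using T_sub by (intro cspan_fam_cong) (auto simp: g_def)
  moreover have "cspan_fam T g \<subseteq> cspan_fam E g"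
    using cspan_fam_mono[OF fin] T_sub by blast
  moreover have "cspan_fam E g \<subseteq> {x. cdot a x = 0}"
    using cspan_fam_subset_cdot_kernel[OF fin, of a g] g1H by (simp add: g_def)
  ultimately have "cspan_fam E g = {x. cdot a x = 0}"
    by blast
  then obtain z where z: "(\<lambda>e. g e + z e *s q) \<in> circuit_variety TYPE('n) E indep"
    "cspan_fam E (\<lambda>e. g e + z e *s q) = UNIV"
    using lift aq unfolding liftable_iff[OF fin] has_spanning_lift_def by blast
  define L' where "L' = (\<lambda>e. g1 e + z e *s q)"
  have L'_eq: "g e + z e *s q = L' e" if "e \<in> E - {p}" for e
    using that by (simp add: g_def L'_def)
  have "L' \<in> circuit_variety TYPE('n) (E - {p}) (mdelete indep p)"
    using circuit_variety_restrict_deletion[OF z(1)] L'_eq by simp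
  then have "cspan_fam (E - {p}) L' \<noteq> UNIV"
    using no_lift unfolding has_spanning_lift_def L'_def by blast
  then obtain A where A: "A \<noteq> 0" "\<forall>x\<in>cspan_fam (E - {p}) L'. cdot A x = 0"
    using ex_cdot_annihilator[OF subspace_cspan_fam[OF fin']] by blast
  have "\<forall>e\<in>E - {p}. cdot A (g e + z e *s q) = 0"
    using A(2) cspan_fam_base[OF fin', of _ L'] L'_eq by simp
  moreover have "insert p T \<subseteq> S" "card (insert p T) = CARD('n)"
    using T S(2) fin_T by (auto simp: subset_Diff_insert)
  then have "\<not> indep (insert p T)"
    using dep_hyperplane_circuit[OF S(1)] unfolding circuit_def by blast
  ultimately have "clin_dependent T (\<lambda>e. g e + z e *s q)"
    using clin_dependent_if_deletion_in_hyperplane[OF fin z A(1)] T_sub pE by blast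
  moreover have "clin_dependent T (\<lambda>e. g e + z e *s q) = clin_dependent T L'"
    using T_sub L'_eq by (intro clin_dependent_cong) blast
  ultimately have "clin_dependent T g1"
    using clin_dependent_of_lift[of a q T g1 z] aq g1H T_sub unfolding L'_def by auto
  then show False
    using T(3) by blast
qed

lemma not_liftable_if_deletion_not_liftable:
  fixes indep :: "'a set \<Rightarrow> bool"
  assumes M: "matroid E indep" and pE: "p \<in> E"
    and not_lift': "\<not> liftable TYPE('n::finite) (E - {p}) (mdelete indep p)"
    and deg: "1 \<le> mdeg CARD('n) E indep p"
  shows "\<not> liftable TYPE('n) E indep"
proof -
  have fin': "finite (E - {p})"
    using matroid_finite[OF M] by simp
  obtain S where S: "dep_hyperplane CARD('n) E indep S" "p \<in> S"
    using ex_dep_hyperplane_if_mdeg_ge_1[OF deg] by blast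
  have fin_S: "finite S"
    using finite_subset[OF dep_hyperplane_subset[OF S(1)] matroid_finite[OF M]] .
  have X: "S - {p} \<subseteq> E - {p}" "CARD('n) \<le> card (S - {p}) + 1"
    using dep_hyperplane_subset[OF S(1)] dep_hyperplane_card[OF S(1)] S(2) fin_S by auto
  obtain g0 :: "'a \<Rightarrow> complex^'n" and a q where aq: "cdot a q \<noteq> 0"
    and g0: "cspan_fam (E - {p}) g0 = {x. cdot a x = 0}" "\<not> has_spanning_lift (E - {p}) (mdelete indep p) g0 q"
    using not_lift' unfolding liftable_iff[OF fin'] by blast
  obtain g1 T where "\<forall>e\<in>E - {p}. cdot a (g1 e) = 0" "T \<subseteq> S - {p}" "card T + 1 = CARD('n)"
    "\<not> clin_dependent T g1" "\<not> has_spanning_lift (E - {p}) (mdelete indep p) g1 q"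
    using ex_nonliftable_config_with_independent_subset[OF fin' aq g0 X] by blast
  then show ?thesis
    using not_liftable_if_nonliftable_config[OF M pE S aq] by blast
qed

theorem lemma5p5:
  fixes indep :: "nat set \<Rightarrow> bool" and d p :: nat
  assumes "matroid {1..d} indep"
    and "paving CARD('n::finite) {1..d} indep"
    and "p \<in> {1..d}"
    and "\<exists>C. circuit {1..d} indep C \<and> p \<in> C"
  shows "(liftable TYPE('n) ({1..d} - {p}) (mdelete indep p) \<and> mdeg CARD('n) {1..d} indep p \<le> 1
            \<longrightarrow> liftable TYPE('n) {1..d} indep)
       \<and> (\<not> liftable TYPE('n) ({1..d} - {p}) (mdelete indep p) \<and> mdeg CARD('n) {1..d} indep p \<ge> 1
            \<longrightarrow> \<not> liftable TYPE('n) {1..d} indep)"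
  using liftable_if_deletion_liftable[OF assms(1-3)] not_liftable_if_deletion_not_liftable[OF assms(1,3)]
  by blast

end
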